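(* Let $(\mathcal A,\mathcal H,D)_\sigma$ be a twisted spectral triple and $e\in M_q(\mathcal A)$ an idempotent with $\sigma(e)=e^*$. Let $\mathcal E=e\mathcal A^q$ with its canonical $\sigma$-translation $\mathcal E^\sigma=\sigma(e)\mathcal A^q$, $\sigma^{\mathcal E}((\xi_j))=(\sigma(\xi_j))$, let $(\cdot,\cdot)_{\mathcal E}$ be a Hermitian metric on $\mathcal E$, and let $\mathfrak s:\mathcal E^\sigma\to\mathcal E$ be the unique $\mathcal A$-linear isomorphism with $(\mathfrak s\eta,\xi)_{\mathcal E}=(\eta,\xi)_0$ for all $\eta\in\mathcal E^\sigma,\xi\in\mathcal E$. Then $\{(\cdot,\cdot)_{\mathcal E},\mathfrak s\}$ is a $\sigma$-Hermitian structure on $\mathcal E$, and the Grassmannian $\sigma$-connection $\nabla_0^{\mathcal E}\xi=\sigma(e)\big(d_\sigma\xi_j\big)_{j=1}^q$ is a $\sigma$-Hermitian $\sigma$-connection on $\mathcal E$.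
   Context: Twisted spectral triple: $\mathbb Z_2$-graded $\mathcal H$, unital involutive algebra $\mathcal A$ closed under holomorphic functional calculus acting by even bounded operators, automorphism $\sigma$ with $\sigma(a)^*=\sigma^{-1}(a^* )$, odd selfadjoint $D$ with compact resolvent, $a(\mathrm{dom}D)\subset\mathrm{dom}D$ and $[D,a]_\sigma=Da-\sigma(a)D$ bounded. $(\xi,\eta)_0=\sum_j\xi_j^*\eta_j$ is the canonical metric on $\mathcal A^q$. $\Omega^1_{D,\sigma}(\mathcal A)=\mathrm{span}\{a[D,b]_\sigma\}$, $d_\sigma a=[D,a]_\sigma$; $\sigma(e)\mathcal A^q\otimes_{\mathcal A}\Omega^1_{D,\sigma}(\mathcal A)$ is identified with $\sigma(e)\Omega^1_{D,\sigma}(\mathcal A)^q$. A $\sigma$-connection is a $\mathbb C$-linear $\nabla:\mathcal E\to\mathcal E^\sigma\otimes_{\mathcal A}\Omega^1_{D,\sigma}(\mathcal A)$ with $\nabla(\xi a)=(\nabla\xi)a+\sigma^{\mathcal E}(\xi)\otimes d_\sigma a$. A Hermitian metric is $(\cdot,\cdot):\mathcal E\times\mathcal E\to\mathcal A$ with $(\xi a,\eta b)=a^*(\xi,\eta)b$, biadditive, positive, nondegenerate. A $\sigma$-Hermitian structure is a Hermitian metric with a right-module isomorphism $\mathfrak s:\mathcal E^\sigma\to\mathcal E$ such that $(\xi_1,\mathfrak s\sigma^{\mathcal E}(\xi_2))=\sigma((\mathfrak s\sigma^{\mathcal E}(\xi_1),\xi_2))$. A $\sigma$-connection is $\sigma$-Hermitian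 if for all $\xi,\eta\in\mathcal E$, writing $\nabla\xi=\sum\xi_\alpha\otimes\omega_\alpha$, $\nabla\eta=\sum\eta_\beta\otimes\psi_\beta$, $\sum_\beta(\xi,\mathfrak s\eta_\beta)\psi_\beta-\sum_\alpha\omega_\alpha^*(\mathfrak s\xi_\alpha,\eta)=d_\sigma\big((\mathfrak s\sigma^{\mathcal E}(\xi),\eta)\big)$. *)

theory Defs
  imports "HOL-Analysis.Analysis" "HOL-Library.Function_Algebras"
begin

text \<open>A complex Hilbert space is a type 'h with a complex scalar multiplication scl and
  an inner product ip (antilinear in the first, linear in the second argument, as for
  the canonical metric on A^q), complete for the induced norm.\<close>

definition hnorm :: "('h \<Rightarrow> 'h \<Rightarrow> complex) \<Rightarrow> 'h \<Rightarrow> real" where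
  "hnorm ip x = sqrt (Re (ip x x))"

definition chilbert :: "(complex \<Rightarrow> 'h::ab_group_add \<Rightarrow> 'h) \<Rightarrow> ('h \<Rightarrow> 'h \<Rightarrow> complex) \<Rightarrow> bool" where
  "chilbert scl ip \<longleftrightarrow>
     vector_space scl \<and>
     (\<forall>x y z. ip (x + y) z = ip x z + ip y z) \<and>
     (\<forall>c x y. ip (scl c x) y = cnj c * ip x y) \<and>
     (\<forall>x y. ip y x = cnj (ip x y)) \<and>
     (\<forall>x. Im (ip x x) = 0 \<and> Re (ip x x) \<ge> 0) \<and>
     (\<forall>x. ip x x = 0 \<longrightarrow> x = 0) \<and>
     (\<forall>X. (\<forall>e>0. \<exists>N. \<forall>m\<ge>N. \<forall>n\<ge>N. hnorm ip (X m - X n) < e)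
          \<longrightarrow> (\<exists>L. (\<lambda>n. hnorm ip (X n - L)) \<longlonglongrightarrow> 0))"

definition bounded_op :: "(complex \<Rightarrow> 'h::ab_group_add \<Rightarrow> 'h) \<Rightarrow> ('h \<Rightarrow> 'h \<Rightarrow> complex) \<Rightarrow> ('h \<Rightarrow> 'h) \<Rightarrow> bool" where
  "bounded_op scl ip T \<longleftrightarrow>
     (\<forall>x y. T (x + y) = T x + T y) \<and> (\<forall>c x. T (scl c x) = scl c (T x)) \<and>
     (\<exists>K. \<forall>x. hnorm ip (T x) \<le> K * hnorm ip x)"

definition adj :: "('h \<Rightarrow> 'h \<Rightarrow> complex) \<Rightarrow> ('h \<Rightarrow> 'h) \<Rightarrow> ('h \<Rightarrow> 'h)" where
  "adj ip T = (THE S. \<forall>x y. ip (T x) y = ip x (S y))"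

definition osc :: "(complex \<Rightarrow> 'h \<Rightarrow> 'h) \<Rightarrow> complex \<Rightarrow> ('h \<Rightarrow> 'h) \<Rightarrow> ('h \<Rightarrow> 'h)" where
  "osc scl c T = (\<lambda>x. scl c (T x))"

definition positive_op :: "(complex \<Rightarrow> 'h::ab_group_add \<Rightarrow> 'h) \<Rightarrow> ('h \<Rightarrow> 'h \<Rightarrow> complex) \<Rightarrow> ('h \<Rightarrow> 'h) \<Rightarrow> bool" where
  "positive_op scl ip T \<longleftrightarrow> bounded_op scl ip T \<and>
     (\<forall>x. Im (ip x (T x)) = 0 \<and> Re (ip x (T x)) \<ge> 0)"

definition compact_op :: "(complex \<Rightarrow> 'h::ab_group_add \<Rightarrow> 'h) \<Rightarrow> ('h \<Rightarrow> 'h \<Rightarrow> complex) \<Rightarrow> ('h \<Rightarrow> 'h) \<Rightarrow> bool" where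
  "compact_op scl ip T \<longleftrightarrow> bounded_op scl ip T \<and>
     (\<forall>X M. (\<forall>n. hnorm ip (X n) \<le> M) \<longrightarrow>
        (\<exists>(r::nat \<Rightarrow> nat) L. strict_mono r \<and> (\<lambda>n. hnorm ip (T (X (r n)) - L)) \<longlonglongrightarrow> 0))"

text \<open>The unbounded operator D is given by its domain domD and its action D on domD.
  gam is the grading operator of the Z2-graded Hilbert space.\<close>

definition twisted_spectral_triple ::
  "(complex \<Rightarrow> 'h::ab_group_add \<Rightarrow> 'h) \<Rightarrow> ('h \<Rightarrow> 'h \<Rightarrow> complex) \<Rightarrow> ('h \<Rightarrow> 'h) \<Rightarrow>
   ('h \<Rightarrow> 'h) set \<Rightarrow> (('h \<Rightarrow> 'h) \<Rightarrow> ('h \<Rightarrow> 'h)) \<Rightarrow> 'h set \<Rightarrow> ('h \<Rightarrow> 'h) \<Rightarrow> bool" where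
  "twisted_spectral_triple scl ip gam A sig domD D \<longleftrightarrow>
     chilbert scl ip \<and>
     \<comment> \<open>Z2-grading\<close>
     bounded_op scl ip gam \<and> gam \<circ> gam = id \<and> (\<forall>x y. ip (gam x) y = ip x (gam y)) \<and>
     \<comment> \<open>A: unital involutive algebra of even bounded operators\<close>
     (\<forall>a\<in>A. bounded_op scl ip a \<and> gam \<circ> a = a \<circ> gam) \<and>
     id \<in> A \<and>
     (\<forall>a\<in>A. \<forall>b\<in>A. a + b \<in> A \<and> a \<circ> b \<in> A) \<and>
     (\<forall>c. \<forall>a\<in>A. osc scl c a \<in> A) \<and>
     (\<forall>a\<in>A. adj ip a \<in> A) \<and>
     \<comment> \<open>sigma: algebra automorphism with sigma(a)^* = sigma^{-1}(a^*)\<close>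
     bij_betw sig A A \<and>
     (\<forall>a\<in>A. \<forall>b\<in>A. sig (a + b) = sig a + sig b \<and> sig (a \<circ> b) = sig a \<circ> sig b) \<and>
     (\<forall>c. \<forall>a\<in>A. sig (osc scl c a) = osc scl c (sig a)) \<and>
     sig id = id \<and>
     (\<forall>a\<in>A. adj ip (sig a) = inv_into A sig (adj ip a)) \<and>
     \<comment> \<open>D: odd selfadjoint operator on a dense domain with compact resolvent\<close>
     0 \<in> domD \<and> (\<forall>x\<in>domD. \<forall>y\<in>domD. x + y \<in> domD) \<and> (\<forall>c. \<forall>x\<in>domD. scl c x \<in> domD) \<and>
     (\<forall>x\<in>domD. \<forall>y\<in>domD. D (x + y) = D x + D y) \<and> (\<forall>c. \<forall>x\<in>domD. D (scl c x) = scl c (D x)) \<and>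
     (\<forall>x e. e > 0 \<longrightarrow> (\<exists>y\<in>domD. hnorm ip (x - y) < e)) \<and>
     {y. \<exists>z. \<forall>x\<in>domD. ip (D x) y = ip x z} = domD \<and>
     (\<forall>x\<in>domD. \<forall>y\<in>domD. ip (D x) y = ip x (D y)) \<and>
     (\<forall>x\<in>domD. gam x \<in> domD \<and> D (gam x) = - gam (D x)) \<and>
     (\<exists>R. compact_op scl ip R \<and> (\<forall>x. R x \<in> domD \<and> D (R x) + scl \<i> (R x) = x) \<and>
          (\<forall>x\<in>domD. R (D x + scl \<i> x) = x)) \<and>
     \<comment> \<open>twisted commutators are bounded\<close>
     (\<forall>a\<in>A. a ` domD \<subseteq> domD \<and>
        (\<exists>T. bounded_op scl ip T \<and> (\<forall>x\<in>domD. T x = D (a x) - sig a (D x))))"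

text \<open>d_sigma a = [D,a]_sigma, the (unique) bounded extension of D a - sigma(a) D.\<close>
definition dsig ::
  "(complex \<Rightarrow> 'h::ab_group_add \<Rightarrow> 'h) \<Rightarrow> ('h \<Rightarrow> 'h \<Rightarrow> complex) \<Rightarrow> (('h \<Rightarrow> 'h) \<Rightarrow> ('h \<Rightarrow> 'h)) \<Rightarrow>
   'h set \<Rightarrow> ('h \<Rightarrow> 'h) \<Rightarrow> ('h \<Rightarrow> 'h) \<Rightarrow> ('h \<Rightarrow> 'h)" where
  "dsig scl ip sig domD D a =
     (THE T. bounded_op scl ip T \<and> (\<forall>x\<in>domD. T x = D (a x) - sig a (D x)))"

definition Omega1 ::
  "(complex \<Rightarrow> 'h::ab_group_add \<Rightarrow> 'h) \<Rightarrow> ('h \<Rightarrow> 'h) set \<Rightarrow> (('h \<Rightarrow> 'h) \<Rightarrow> ('h \<Rightarrow> 'h)) \<Rightarrow> ('h \<Rightarrow> 'h) set" where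
  "Omega1 scl A d = {\<omega>. \<exists>ps. (\<forall>(c, a, b)\<in>set ps. a \<in> A \<and> b \<in> A) \<and>
                         \<omega> = sum_list (map (\<lambda>(c, a, b). osc scl c (a \<circ> d b)) ps)}"

text \<open>Vectors are nat-indexed families that vanish at indices \<ge> q; matrices likewise.\<close>

definition vecs :: "nat \<Rightarrow> ('h \<Rightarrow> 'h::zero) set \<Rightarrow> (nat \<Rightarrow> 'h \<Rightarrow> 'h) set" where
  "vecs q S = {\<xi>. (\<forall>j<q. \<xi> j \<in> S) \<and> (\<forall>j\<ge>q. \<xi> j = 0)}"

definition is_mat :: "nat \<Rightarrow> ('h \<Rightarrow> 'h::zero) set \<Rightarrow> (nat \<Rightarrow> nat \<Rightarrow> 'h \<Rightarrow> 'h) \<Rightarrow> bool" where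
  "is_mat q S M \<longleftrightarrow> (\<forall>i j. if i < q \<and> j < q then M i j \<in> S else M i j = 0)"

definition matvec :: "nat \<Rightarrow> (nat \<Rightarrow> nat \<Rightarrow> 'h \<Rightarrow> 'h::comm_monoid_add) \<Rightarrow> (nat \<Rightarrow> 'h \<Rightarrow> 'h) \<Rightarrow> (nat \<Rightarrow> 'h \<Rightarrow> 'h)" where
  "matvec q M \<xi> = (\<lambda>i. if i < q then (\<Sum>j<q. M i j \<circ> \<xi> j) else 0)"

definition matmul :: "nat \<Rightarrow> (nat \<Rightarrow> nat \<Rightarrow> 'h \<Rightarrow> 'h::comm_monoid_add) \<Rightarrow> (nat \<Rightarrow> nat \<Rightarrow> 'h \<Rightarrow> 'h) \<Rightarrow> (nat \<Rightarrow> nat \<Rightarrow> 'h \<Rightarrow> 'h)" where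
  "matmul q M N = (\<lambda>i k. if i < q \<and> k < q then (\<Sum>j<q. M i j \<circ> N j k) else 0)"

definition rmul :: "(nat \<Rightarrow> 'h \<Rightarrow> 'h) \<Rightarrow> ('h \<Rightarrow> 'h) \<Rightarrow> (nat \<Rightarrow> 'h \<Rightarrow> 'h)" where
  "rmul \<xi> a = (\<lambda>j. \<xi> j \<circ> a)"

definition sigvec :: "nat \<Rightarrow> (('h \<Rightarrow> 'h) \<Rightarrow> ('h \<Rightarrow> 'h::zero)) \<Rightarrow> (nat \<Rightarrow> 'h \<Rightarrow> 'h) \<Rightarrow> (nat \<Rightarrow> 'h \<Rightarrow> 'h)" where
  "sigvec q sig \<xi> = (\<lambda>j. if j < q then sig (\<xi> j) else 0)"

definition metric0 :: "nat \<Rightarrow> ('h \<Rightarrow> 'h \<Rightarrow> complex) \<Rightarrow> (nat \<Rightarrow> 'h \<Rightarrow> 'h::comm_monoid_add) \<Rightarrow> (nat \<Rightarrow> 'h \<Rightarrow> 'h) \<Rightarrow> ('h \<Rightarrow> 'h)" where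
  "metric0 q ip \<xi> \<eta> = (\<Sum>j<q. adj ip (\<xi> j) \<circ> \<eta> j)"

definition hermitian_metric ::
  "(complex \<Rightarrow> 'h::ab_group_add \<Rightarrow> 'h) \<Rightarrow> ('h \<Rightarrow> 'h \<Rightarrow> complex) \<Rightarrow> ('h \<Rightarrow> 'h) set \<Rightarrow>
   (nat \<Rightarrow> 'h \<Rightarrow> 'h) set \<Rightarrow> ((nat \<Rightarrow> 'h \<Rightarrow> 'h) \<Rightarrow> (nat \<Rightarrow> 'h \<Rightarrow> 'h) \<Rightarrow> ('h \<Rightarrow> 'h)) \<Rightarrow> bool" where
  "hermitian_metric scl ip A E h \<longleftrightarrow>
     (\<forall>\<xi>\<in>E. \<forall>\<eta>\<in>E. h \<xi> \<eta> \<in> A) \<and>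
     (\<forall>\<xi>\<in>E. \<forall>\<eta>\<in>E. \<forall>a\<in>A. \<forall>b\<in>A. h (rmul \<xi> a) (rmul \<eta> b) = adj ip a \<circ> h \<xi> \<eta> \<circ> b) \<and>
     (\<forall>\<xi>\<in>E. \<forall>\<xi>'\<in>E. \<forall>\<eta>\<in>E. h (\<xi> + \<xi>') \<eta> = h \<xi> \<eta> + h \<xi>' \<eta> \<and> h \<eta> (\<xi> + \<xi>') = h \<eta> \<xi> + h \<eta> \<xi>') \<and>
     (\<forall>\<xi>\<in>E. positive_op scl ip (h \<xi> \<xi>)) \<and>
     (\<forall>\<xi>\<in>E. (\<forall>\<eta>\<in>E. h \<xi> \<eta> = 0) \<longrightarrow> \<xi> = 0)"

definition module_iso ::
  "('h \<Rightarrow> 'h) set \<Rightarrow> (nat \<Rightarrow> 'h \<Rightarrow> 'h::ab_group_add) set \<Rightarrow> (nat \<Rightarrow> 'h \<Rightarrow> 'h) set \<Rightarrow>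
   ((nat \<Rightarrow> 'h \<Rightarrow> 'h) \<Rightarrow> (nat \<Rightarrow> 'h \<Rightarrow> 'h)) \<Rightarrow> bool" where
  "module_iso A E' E s \<longleftrightarrow> bij_betw s E' E \<and>
     (\<forall>\<eta>\<in>E'. \<forall>\<eta>'\<in>E'. s (\<eta> + \<eta>') = s \<eta> + s \<eta>') \<and>
     (\<forall>\<eta>\<in>E'. \<forall>a\<in>A. s (rmul \<eta> a) = rmul (s \<eta>) a)"

definition sigma_hermitian_structure ::
  "(complex \<Rightarrow> 'h::ab_group_add \<Rightarrow> 'h) \<Rightarrow> ('h \<Rightarrow> 'h \<Rightarrow> complex) \<Rightarrow> ('h \<Rightarrow> 'h) set \<Rightarrow>
   (('h \<Rightarrow> 'h) \<Rightarrow> ('h \<Rightarrow> 'h)) \<Rightarrow> (nat \<Rightarrow> 'h \<Rightarrow> 'h) set \<Rightarrow> (nat \<Rightarrow> 'h \<Rightarrow> 'h) set \<Rightarrow>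
   ((nat \<Rightarrow> 'h \<Rightarrow> 'h) \<Rightarrow> (nat \<Rightarrow> 'h \<Rightarrow> 'h)) \<Rightarrow>
   ((nat \<Rightarrow> 'h \<Rightarrow> 'h) \<Rightarrow> (nat \<Rightarrow> 'h \<Rightarrow> 'h) \<Rightarrow> ('h \<Rightarrow> 'h)) \<Rightarrow>
   ((nat \<Rightarrow> 'h \<Rightarrow> 'h) \<Rightarrow> (nat \<Rightarrow> 'h \<Rightarrow> 'h)) \<Rightarrow> bool" where
  "sigma_hermitian_structure scl ip A sig E Esig sigE h s \<longleftrightarrow>
     hermitian_metric scl ip A E h \<and> module_iso A Esig E s \<and>
     (\<forall>\<xi>1\<in>E. \<forall>\<xi>2\<in>E. h \<xi>1 (s (sigE \<xi>2)) = sig (h (s (sigE \<xi>1)) \<xi>2))"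

text \<open>E^sigma (x)_A Omega^1 is identified with sigma(e) Omega^1(A)^q (given as the set T);
  an elementary tensor eta (x) omega corresponds to the vector (eta_j omega)_j.\<close>

definition sigma_connection ::
  "(complex \<Rightarrow> 'h::ab_group_add \<Rightarrow> 'h) \<Rightarrow> ('h \<Rightarrow> 'h) set \<Rightarrow> (('h \<Rightarrow> 'h) \<Rightarrow> ('h \<Rightarrow> 'h)) \<Rightarrow>
   (nat \<Rightarrow> 'h \<Rightarrow> 'h) set \<Rightarrow> (nat \<Rightarrow> 'h \<Rightarrow> 'h) set \<Rightarrow>
   ((nat \<Rightarrow> 'h \<Rightarrow> 'h) \<Rightarrow> (nat \<Rightarrow> 'h \<Rightarrow> 'h)) \<Rightarrow>
   ((nat \<Rightarrow> 'h \<Rightarrow> 'h) \<Rightarrow> (nat \<Rightarrow> 'h \<Rightarrow> 'h)) \<Rightarrow> bool" where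
  "sigma_connection scl A d E T sigE nabla \<longleftrightarrow>
     (\<forall>\<xi>\<in>E. nabla \<xi> \<in> T) \<and>
     (\<forall>\<xi>\<in>E. \<forall>\<eta>\<in>E. nabla (\<xi> + \<eta>) = nabla \<xi> + nabla \<eta>) \<and>
     (\<forall>c. \<forall>\<xi>\<in>E. nabla (\<lambda>j. osc scl c (\<xi> j)) = (\<lambda>j. osc scl c (nabla \<xi> j))) \<and>
     (\<forall>\<xi>\<in>E. \<forall>a\<in>A. nabla (rmul \<xi> a) = rmul (nabla \<xi>) a + (\<lambda>j. sigE \<xi> j \<circ> d a))"

definition decomp ::
  "(nat \<Rightarrow> 'h \<Rightarrow> 'h) set \<Rightarrow> ('h \<Rightarrow> 'h) set \<Rightarrow> (nat \<Rightarrow> 'h \<Rightarrow> 'h::ab_group_add) \<Rightarrow>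
   ((nat \<Rightarrow> 'h \<Rightarrow> 'h) \<times> ('h \<Rightarrow> 'h)) list \<Rightarrow> bool" where
  "decomp Esig Om v ps \<longleftrightarrow> (\<forall>(\<eta>, \<omega>)\<in>set ps. \<eta> \<in> Esig \<and> \<omega> \<in> Om) \<and>
     v = sum_list (map (\<lambda>(\<eta>, \<omega>). rmul \<eta> \<omega>) ps)"

definition sigma_hermitian_connection ::
  "('h \<Rightarrow> 'h \<Rightarrow> complex) \<Rightarrow> (('h \<Rightarrow> 'h) \<Rightarrow> ('h \<Rightarrow> 'h::ab_group_add)) \<Rightarrow> ('h \<Rightarrow> 'h) set \<Rightarrow>
   (nat \<Rightarrow> 'h \<Rightarrow> 'h) set \<Rightarrow> (nat \<Rightarrow> 'h \<Rightarrow> 'h) set \<Rightarrow>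
   ((nat \<Rightarrow> 'h \<Rightarrow> 'h) \<Rightarrow> (nat \<Rightarrow> 'h \<Rightarrow> 'h)) \<Rightarrow>
   ((nat \<Rightarrow> 'h \<Rightarrow> 'h) \<Rightarrow> (nat \<Rightarrow> 'h \<Rightarrow> 'h) \<Rightarrow> ('h \<Rightarrow> 'h)) \<Rightarrow>
   ((nat \<Rightarrow> 'h \<Rightarrow> 'h) \<Rightarrow> (nat \<Rightarrow> 'h \<Rightarrow> 'h)) \<Rightarrow>
   ((nat \<Rightarrow> 'h \<Rightarrow> 'h) \<Rightarrow> (nat \<Rightarrow> 'h \<Rightarrow> 'h)) \<Rightarrow> bool" where
  "sigma_hermitian_connection ip d Om E Esig sigE h s nabla \<longleftrightarrow>
     (\<forall>\<xi>\<in>E. \<forall>\<eta>\<in>E. \<forall>ps qs. decomp Esig Om (nabla \<xi>) ps \<longrightarrow> decomp Esig Om (nabla \<eta>) qs \<longrightarrow>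
        sum_list (map (\<lambda>(\<eta>b, \<psi>). h \<xi> (s \<eta>b) \<circ> \<psi>) qs)
        - sum_list (map (\<lambda>(\<xi>a, \<omega>). adj ip \<omega> \<circ> h (s \<xi>a) \<eta>) ps)
        = d (h (s (sigE \<xi>)) \<eta>))"

end

theory Submission
  imports Defs
begin

text \<open>Positivity of the Hermitian metric gives, by polarization, that (xi, eta) and (eta, xi)
  are mutually adjoint operators; hence (xi, s eta) = (xi, eta)_0 as well, and the
  sigma-Hermitian identity reduces componentwise to sigma(sigma(a)^* b) = a^* sigma(b).
  For the connection, the twisted Leibniz rule d(ab) = sigma(a) d(b) + d(a) b together with
  d(a)^* = - d(sigma(a)^*), which comes from the selfadjointness of D, gives
  d((s sigma(xi), eta)) = sum_k xi_k^* d(eta_k) - d(xi_k)^* eta_k; the projection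
  sigma(e) = e^* occurring in the connection is absorbed in both pairings because e xi = xi.
  The Hilbert space enters through the existence of adjoints of bounded operators (Riesz
  representation) and through the density of the domain of D, which makes the bounded
  extension d(a) of D a - sigma(a) D unique.\<close>

lemma sum_fun_apply: "(sum f I) x = (\<Sum>i\<in>I. f i x)"
  by (induction I rule: infinite_finite_induct) auto

lemma sum_list_fun_apply: "(sum_list fs) x = sum_list (map (\<lambda>f. f x) fs)"
  by (induction fs) auto

lemma sum_list_sum_swap:
  "sum_list (map (\<lambda>p. \<Sum>j\<in>J. g p j) ps) = (\<Sum>j\<in>J. sum_list (map (\<lambda>p. g p j) ps))"
  by (induction ps) (auto simp: sum.distrib)

lemma comp_uminus_left: "(- f) \<circ> h = - (f \<circ> h)"
  by (rule ext) simp

lemma comp_zero_left [simp]: "(0::'b \<Rightarrow> 'c::zero) \<circ> f = 0"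
  by (rule ext) simp

lemma comp_sum_left: "(\<Sum>i\<in>I. f i) \<circ> h = (\<Sum>i\<in>I. f i \<circ> h)"
  by (rule ext) (simp add: sum_fun_apply)

lemma comp_sum_list_left: "sum_list (map f ps) \<circ> h = sum_list (map (\<lambda>p. f p \<circ> h) ps)"
  by (rule ext) (simp add: sum_list_fun_apply comp_def)

section \<open>Complex Hilbert spaces\<close>

locale complex_hilbert = vector_space scl
  for scl :: "complex \<Rightarrow> 'h::ab_group_add \<Rightarrow> 'h" +
  fixes ip :: "'h \<Rightarrow> 'h \<Rightarrow> complex"
  assumes ip_add_left: "ip (x + y) z = ip x z + ip y z"
    and ip_scale_left: "ip (scl c x) y = cnj c * ip x y"
    and ip_cnj: "ip y x = cnj (ip x y)"
    and ip_self_Im: "Im (ip x x) = 0"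
    and ip_self_Re_nonneg: "Re (ip x x) \<ge> 0"
    and ip_self_eq_0D: "ip x x = 0 \<Longrightarrow> x = 0"
    and cauchy_has_limit: "\<forall>e>0. \<exists>M. \<forall>m\<ge>M. \<forall>n\<ge>M. hnorm ip (X m - X n) < e
      \<Longrightarrow> \<exists>L. (\<lambda>n. hnorm ip (X n - L)) \<longlonglongrightarrow> 0"

lemma complex_hilbertI: "chilbert scl ip \<Longrightarrow> complex_hilbert scl ip"
  unfolding chilbert_def complex_hilbert_def complex_hilbert_axioms_def
  by (elim conjE) (intro conjI allI impI; metis)

context complex_hilbert
begin

abbreviation nrm :: "'h \<Rightarrow> real" where "nrm x \<equiv> hnorm ip x"

lemma ip_add_right: "ip z (x + y) = ip z x + ip z y"
proof -
  have "ip z (x + y) = cnj (ip x z) + cnj (ip y z)"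
    by (subst ip_cnj) (simp add: ip_add_left)
  then show ?thesis by (simp add: ip_cnj[of x z] ip_cnj[of y z])
qed

lemma ip_scale_right: "ip y (scl c x) = c * ip y x"
proof -
  have "ip y (scl c x) = c * cnj (ip x y)"
    by (subst ip_cnj) (simp add: ip_scale_left)
  then show ?thesis by (simp add: ip_cnj[of x y])
qed

lemma ip_zero_left [simp]: "ip 0 y = 0"
  using ip_add_left[of 0 0 y] by simp

lemma ip_zero_right [simp]: "ip y 0 = 0"
  using ip_add_right[of y 0 0] by simp

lemma ip_minus_left: "ip (- x) y = - ip x y"
  using ip_add_left[of x "-x" y] by (simp add: eq_neg_iff_add_eq_0 add.commute)

lemma ip_minus_right: "ip y (- x) = - ip y x"
  using ip_add_right[of y x "-x"] by (simp add: eq_neg_iff_add_eq_0 add.commute)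

lemma ip_diff_left: "ip (x - z) y = ip x y - ip z y"
  using ip_add_left[of x "-z" y] ip_minus_left[of z y] by simp

lemma ip_diff_right: "ip y (x - z) = ip y x - ip y z"
  using ip_add_right[of y x "-z"] ip_minus_right[of y z] by simp

lemma ip_self_real: "ip x x = complex_of_real (Re (ip x x))"
  using ip_self_Im[of x] by (simp add: complex_eq_iff)

lemma ip_eqI: "(\<And>x. ip x a = ip x b) \<Longrightarrow> a = b"
proof -
  assume "\<And>x. ip x a = ip x b"
  then have "ip (a - b) (a - b) = 0" by (simp add: ip_diff_right)
  then have "a - b = 0" by (rule ip_self_eq_0D)
  then show "a = b" by simp
qed

lemma nrm_square: "(nrm x)\<^sup>2 = Re (ip x x)"
  unfolding hnorm_def using ip_self_Re_nonneg[of x] by simp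

lemma nrm_nonneg: "nrm x \<ge> 0"
  unfolding hnorm_def using ip_self_Re_nonneg[of x] by simp

lemma nrm_zero [simp]: "nrm 0 = 0"
  unfolding hnorm_def by simp

lemma nrm_eq_0_iff: "nrm x = 0 \<longleftrightarrow> x = 0"
proof
  assume "nrm x = 0"
  then have "ip x x = 0" using nrm_square[of x] ip_self_real[of x] by simp
  then show "x = 0" by (rule ip_self_eq_0D)
qed simp

lemma nrm_scale: "nrm (scl c x) = cmod c * nrm x"
proof -
  have "ip (scl c x) (scl c x) = cnj c * c * ip x x"
    by (simp add: ip_scale_left ip_scale_right)
  also have "cnj c * c = complex_of_real ((cmod c)\<^sup>2)"
    by (metis complex_norm_square mult.commute)
  finally have "Re (ip (scl c x) (scl c x)) = (cmod c)\<^sup>2 * Re (ip x x)"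
    using ip_self_real[of x] by (metis Re_complex_of_real of_real_mult)
  then show ?thesis unfolding hnorm_def by (simp add: real_sqrt_mult)
qed

lemma nrm_minus_commute: "nrm (x - y) = nrm (y - x)"
  using nrm_scale[of "-1" "x - y"] by simp

lemma ip_add_self: "ip (x + y) (x + y) = ip x x + ip x y + cnj (ip x y) + ip y y"
  by (simp add: ip_add_left ip_add_right ip_cnj[of x y])

lemma cauchy_schwarz: "cmod (ip x y) \<le> nrm x * nrm y"
proof (cases "y = 0")
  case True
  then show ?thesis by simp
next
  case False
  define b where "b = Re (ip y y)"
  have b: "b > 0"
    using False nrm_eq_0_iff[of y] nrm_square[of y] nrm_nonneg[of y] b_def
    by (metis less_eq_real_def zero_less_power2)
  define a where "a = ip y x"
  define t where "t = a / complex_of_real b"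
  have yy: "ip y y = complex_of_real b" using ip_self_real b_def by simp
  have xy: "ip x y = cnj a" unfolding a_def by (rule ip_cnj)
  have aa: "a * cnj a = complex_of_real ((cmod a)\<^sup>2)" by (rule complex_norm_square[symmetric])
  \<comment> \<open>t y is the orthogonal projection of x onto y\<close>
  have "ip (x - scl t y) (x - scl t y) = ip x x - t * cnj a - cnj t * a + cnj t * t * complex_of_real b"
    by (simp add: ip_diff_left ip_diff_right ip_scale_left ip_scale_right
        a_def[symmetric] xy yy algebra_simps)
  also have "t * cnj a = complex_of_real ((cmod a)\<^sup>2 / b)"
  proof -
    have "t * cnj a = (a * cnj a) / complex_of_real b" unfolding t_def by simp
    then show ?thesis unfolding aa by simp
  qed
  also have "cnj t * a = complex_of_real ((cmod a)\<^sup>2 / b)"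
  proof -
    have "cnj t * a = (a * cnj a) / complex_of_real b" unfolding t_def by (simp add: mult.commute)
    then show ?thesis unfolding aa by simp
  qed
  also have "cnj t * t * complex_of_real b = complex_of_real ((cmod a)\<^sup>2 / b)"
  proof -
    have "cnj t * t * complex_of_real b = (cnj a * a) / complex_of_real b"
      using b unfolding t_def by (simp add: power2_eq_square)
    also have "cnj a * a = complex_of_real ((cmod a)\<^sup>2)" using aa by (simp add: mult.commute)
    finally show ?thesis by simp
  qed
  finally have "Re (ip (x - scl t y) (x - scl t y)) = Re (ip x x) - (cmod a)\<^sup>2 / b"
    by simp
  then have "(cmod a)\<^sup>2 / b \<le> Re (ip x x)"
    using ip_self_Re_nonneg[of "x - scl t y"] by simp
  then have "(cmod a)\<^sup>2 \<le> Re (ip x x) * b" using b by (simp add: pos_divide_le_eq)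
  also have "\<dots> = (nrm x * nrm y)\<^sup>2" using nrm_square b_def by (simp add: power_mult_distrib)
  finally have "cmod a \<le> nrm x * nrm y"
    using nrm_nonneg by (meson mult_nonneg_nonneg power2_le_imp_le)
  then show ?thesis using xy by simp
qed

lemma nrm_triangle: "nrm (x + y) \<le> nrm x + nrm y"
proof -
  have "Re (ip x y) \<le> nrm x * nrm y"
    using cauchy_schwarz[of x y] complex_Re_le_cmod order_trans by blast
  then have "(nrm (x + y))\<^sup>2 \<le> (nrm x + nrm y)\<^sup>2"
    using nrm_square[of "x + y"] nrm_square[of x] nrm_square[of y] ip_add_self[of x y]
    by (simp add: power2_sum)
  then show ?thesis
    using nrm_nonneg by (meson add_nonneg_nonneg power2_le_imp_le)
qed

lemma parallelogram: "(nrm (x + y))\<^sup>2 + (nrm (x - y))\<^sup>2 = 2 * (nrm x)\<^sup>2 + 2 * (nrm y)\<^sup>2"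
proof -
  have "ip (x - y) (x - y) = ip x x - ip x y - cnj (ip x y) + ip y y"
    by (simp add: ip_diff_left ip_diff_right ip_cnj[of x y])
  then show ?thesis using ip_add_self[of x y] by (simp add: nrm_square)
qed

lemma ip_eq_0_if_minimal:
  assumes min: "\<And>t. nrm x \<le> nrm (x + scl t v)"
  shows "ip x v = 0"
proof (rule ccontr)
  assume ne: "ip x v \<noteq> 0"
  define a where "a = ip x v"
  define c where "c = (nrm v)\<^sup>2"
  define s where "s = 1 / (c + 1)"
  define t where "t = - complex_of_real s * cnj a"
  have c0: "c \<ge> 0" unfolding c_def by simp
  have s0: "s > 0" unfolding s_def using c0 by simp
  have sc: "s * c < 1" unfolding s_def using c0 by (simp add: field_simps)
  have a0: "cmod a > 0" using ne a_def by simp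
  have "ip (x + scl t v) (x + scl t v) = ip x x + t * a + cnj t * cnj a + cnj t * t * ip v v"
    by (simp add: ip_add_left ip_add_right ip_scale_left ip_scale_right ip_cnj[of x v] a_def
        algebra_simps)
  then have expand: "(nrm (x + scl t v))\<^sup>2
      = Re (ip x x) + Re (t * a) + Re (cnj t * cnj a) + Re (cnj t * t) * c"
    unfolding nrm_square c_def using ip_self_real[of v] nrm_square[of v]
    by (metis Re_complex_of_real plus_complex.sel(1) times_complex.sel(1) Im_complex_of_real
        mult_zero_right diff_zero)
  have "(nrm x)\<^sup>2 \<le> (nrm (x + scl t v))\<^sup>2"
    using min[of t] nrm_nonneg by (simp add: power_mono)
  then have ineq: "0 \<le> Re (t * a) + Re (cnj t * cnj a) + Re (cnj t * t) * c"
    using nrm_square[of x] expand by simp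
  have aa: "cnj a * a = complex_of_real ((cmod a)\<^sup>2)" by (metis complex_norm_square mult.commute)
  have "t * a = - complex_of_real (s * (cmod a)\<^sup>2)"
    unfolding t_def using aa by (simp add: mult.assoc)
  moreover have "cnj t * cnj a = - complex_of_real (s * (cmod a)\<^sup>2)"
    unfolding t_def using aa by (simp add: mult.assoc mult.commute[of a])
  moreover have "cnj t * t = complex_of_real (s\<^sup>2 * (cmod a)\<^sup>2)"
    unfolding t_def using aa by (simp add: power2_eq_square algebra_simps)
  ultimately have "2 * s * (cmod a)\<^sup>2 \<le> s * (cmod a)\<^sup>2 * (s * c)"
    using ineq by (simp add: power2_eq_square algebra_simps)
  also have "\<dots> < s * (cmod a)\<^sup>2 * 1"
    using sc s0 a0 by (intro mult_strict_left_mono) auto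
  finally show False using s0 a0 by simp
qed


lemma minimizing_sequence_cauchy:
  assumes add: "\<And>x y. f (x + y) = f x + f y" and sc: "\<And>c x. f (scl c x) = c * f x"
    and m_pos: "m > 0" and m_le: "\<And>x. f x = 1 \<Longrightarrow> m \<le> nrm x"
    and X: "\<And>n. f (X n) = 1" "\<And>n. nrm (X n) < m + inverse (real (Suc n))"
  shows "\<forall>e>0. \<exists>M. \<forall>n\<ge>M. \<forall>k\<ge>M. nrm (X n - X k) < e"
proof (intro allI impI)
  fix e :: real
  assume e: "e > 0"
  \<comment> \<open>the midpoint of X n and X k lies in the level set, so the parallelogram law applies\<close>
  have bound: "(nrm (X n - X k))\<^sup>2 \<le> 2 * (nrm (X n))\<^sup>2 + 2 * (nrm (X k))\<^sup>2 - 4 * m\<^sup>2" for n k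
  proof -
    have "f (scl (1/2) (X n + X k)) = 1" using sc add X(1) by simp
    then have "m \<le> nrm (scl (1/2) (X n + X k))" by (rule m_le)
    then have "2 * m \<le> nrm (X n + X k)" unfolding nrm_scale by simp
    then have "(2 * m)\<^sup>2 \<le> (nrm (X n + X k))\<^sup>2" using m_pos by (intro power_mono) auto
    then show ?thesis using parallelogram[of "X n" "X k"] by (simp add: power_mult_distrib)
  qed
  define d where "d = min 1 (e\<^sup>2 / (4 * (2 * m + 1)))"
  have d0: "d > 0" unfolding d_def using e m_pos by simp
  obtain M where M: "inverse (real (Suc M)) < d"
    using reals_Archimedean[OF d0] by blast
  have close: "nrm (X n) < m + d" if "n \<ge> M" for n
  proof -
    have "inverse (real (Suc n)) \<le> inverse (real (Suc M))"
      using that by (intro le_imp_inverse_le) auto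
    then show ?thesis using M X(2)[of n] by linarith
  qed
  have "nrm (X n - X k) < e" if "n \<ge> M" "k \<ge> M" for n k
  proof -
    have "(nrm (X n))\<^sup>2 < (m + d)\<^sup>2"
      using close[OF that(1)] nrm_nonneg by (intro power_strict_mono) auto
    moreover have "(nrm (X k))\<^sup>2 < (m + d)\<^sup>2"
      using close[OF that(2)] nrm_nonneg by (intro power_strict_mono) auto
    ultimately have "(nrm (X n - X k))\<^sup>2 < 4 * ((m + d)\<^sup>2 - m\<^sup>2)" using bound[of n k] by simp
    also have "\<dots> = 4 * d * (2 * m + d)" by (simp add: power2_eq_square algebra_simps)
    also have "\<dots> \<le> 4 * d * (2 * m + 1)" using d0 unfolding d_def by (intro mult_left_mono) auto
    also have "\<dots> \<le> 4 * (e\<^sup>2 / (4 * (2 * m + 1))) * (2 * m + 1)"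
      using m_pos unfolding d_def by (intro mult_right_mono mult_left_mono) auto
    also have "\<dots> = e\<^sup>2" using m_pos by (simp add: field_simps)
    finally show ?thesis using e nrm_nonneg by (meson less_le power2_less_imp_less)
  qed
  then show "\<exists>M. \<forall>n\<ge>M. \<forall>k\<ge>M. nrm (X n - X k) < e" by blast
qed

lemma level_set_has_minimal_element:
  assumes add: "\<And>x y. f (x + y) = f x + f y" and sc: "\<And>c x. f (scl c x) = c * f x"
    and bd: "\<And>x. cmod (f x) \<le> K * nrm x" and x0: "f x0 \<noteq> 0"
  shows "\<exists>L. f L = 1 \<and> (\<forall>x. f x = 1 \<longrightarrow> nrm L \<le> nrm x)"
proof -
  have fdiff: "f (x - y) = f x - f y" for x y using add[of "x - y" y] by simp
  define S where "S = {r. \<exists>x. f x = 1 \<and> r = nrm x}"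
  have "f (scl (1 / f x0) x0) = 1" using sc x0 by simp
  then have S_ne: "S \<noteq> {}" unfolding S_def by blast
  have K_pos: "K > 0" and K_inv: "1 / K \<le> nrm x" if "f x = 1" for x
  proof -
    have "1 \<le> K * nrm x" using bd[of x] that by simp
    then show "K > 0" using nrm_nonneg[of x] by (smt (verit) mult_nonpos_nonneg)
    then show "1 / K \<le> nrm x" using \<open>1 \<le> K * nrm x\<close> by (simp add: field_simps)
  qed
  have S_bdd: "bdd_below S" unfolding S_def bdd_below_def using nrm_nonneg by blast
  define m where "m = Inf S"
  have m_le: "m \<le> nrm x" if "f x = 1" for x
    unfolding m_def using S_bdd that by (intro cInf_lower) (auto simp: S_def)
  have m_pos: "m > 0"
  proof -
    obtain x where x: "f x = 1" using S_ne unfolding S_def by blast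
    have "1 / K \<le> m" unfolding m_def using S_ne K_inv by (intro cInf_greatest) (auto simp: S_def)
    then show ?thesis using K_pos[OF x] by (meson less_le_trans zero_less_divide_1_iff)
  qed
  have "\<exists>x. f x = 1 \<and> nrm x < m + inverse (real (Suc n))" for n
  proof -
    have "Inf S < m + inverse (real (Suc n))" unfolding m_def by simp
    from cInf_lessD[OF S_ne this] show ?thesis unfolding S_def by auto
  qed
  then obtain X where X: "\<And>n. f (X n) = 1" "\<And>n. nrm (X n) < m + inverse (real (Suc n))"
    by metis
  obtain L where L: "(\<lambda>n. nrm (X n - L)) \<longlonglongrightarrow> 0"
    using cauchy_has_limit[OF minimizing_sequence_cauchy[OF add sc m_pos m_le X]] by blast
  have KL: "(\<lambda>n. K * nrm (X n - L)) \<longlonglongrightarrow> 0"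
    using tendsto_mult_left[OF L, of K] by simp
  have "cmod (1 - f L) \<le> K * nrm (X n - L)" for n
    using bd[of "X n - L"] fdiff X(1) by simp
  then have "cmod (1 - f L) \<le> 0" by (intro LIMSEQ_le_const[OF KL]) auto
  then have fL: "f L = 1" by simp
  have lim: "(\<lambda>n. m + inverse (real (Suc n)) + nrm (X n - L)) \<longlonglongrightarrow> m + 0 + 0"
    by (intro tendsto_add tendsto_const L LIMSEQ_inverse_real_of_nat)
  have "nrm L \<le> m + inverse (real (Suc n)) + nrm (X n - L)" for n
  proof -
    have "nrm L \<le> nrm (X n) + nrm (L - X n)" using nrm_triangle[of "X n" "L - X n"] by simp
    then show ?thesis using X(2)[of n] nrm_minus_commute[of L "X n"] by simp
  qed
  then have "nrm L \<le> m" using LIMSEQ_le_const[OF lim] by simp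
  then show ?thesis using fL m_le order_trans by blast
qed

theorem riesz_representation:
  assumes add: "\<And>x y. f (x + y) = f x + f y" and sc: "\<And>c x. f (scl c x) = c * f x"
    and bd: "\<And>x. cmod (f x) \<le> K * nrm x"
  shows "\<exists>z. \<forall>x. f x = ip z x"
proof (cases "\<forall>x. f x = 0")
  case True
  then show ?thesis by (intro exI[of _ 0]) simp
next
  case False
  then obtain x0 where "f x0 \<noteq> 0" by blast
  then obtain L where fL: "f L = 1" and L_min: "\<And>x. f x = 1 \<Longrightarrow> nrm L \<le> nrm x"
    using level_set_has_minimal_element[OF add sc bd] by blast
  \<comment> \<open>L has minimal norm on its level set, hence is orthogonal to the kernel of f\<close>
  have orth: "ip L v = 0" if "f v = 0" for v
  proof (rule ip_eq_0_if_minimal)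
    fix t
    have "f (L + scl t v) = 1" using add sc fL that by simp
    then show "nrm L \<le> nrm (L + scl t v)" by (rule L_min)
  qed
  have fdiff: "f (x - y) = f x - f y" for x y using add[of "x - y" y] by simp
  have "L \<noteq> 0" using fL fdiff[of 0 0] by auto
  then have LL: "ip L L \<noteq> 0" using ip_self_eq_0D by blast
  have key: "ip L x = f x * ip L L" for x
  proof -
    have "f (x - scl (f x) L) = 0" using fdiff sc fL by simp
    then have "ip L (x - scl (f x) L) = 0" by (rule orth)
    then show ?thesis by (simp add: ip_diff_right ip_scale_right)
  qed
  have "f x = ip (scl (inverse (cnj (ip L L))) L) x" for x
    using LL key[of x] by (simp add: ip_scale_left)
  then show ?thesis by blast
qed

abbreviation clinear :: "('h \<Rightarrow> 'h) \<Rightarrow> bool" where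
  "clinear T \<equiv> Vector_Spaces.linear scl scl T"

definition is_adjoint :: "('h \<Rightarrow> 'h) \<Rightarrow> ('h \<Rightarrow> 'h) \<Rightarrow> bool" where
  "is_adjoint T S \<longleftrightarrow> (\<forall>x y. ip (T x) y = ip x (S y))"

lemma clinearI: "(\<And>x y. T (x + y) = T x + T y) \<Longrightarrow> (\<And>c x. T (scl c x) = scl c (T x)) \<Longrightarrow> clinear T"
  by (simp add: Vector_Spaces.linear_iff vector_space_axioms)

lemma clinear_add: "clinear T \<Longrightarrow> T (x + y) = T x + T y"
  and clinear_scale: "clinear T \<Longrightarrow> T (scl c x) = scl c (T x)"
  by (simp_all add: Vector_Spaces.linear_iff)

lemma clinear_diff: "clinear T \<Longrightarrow> T (x - y) = T x - T y"
  by (simp add: module_hom.diff module_hom_iff_linear[symmetric])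

lemma clinear_comp_add: "clinear T \<Longrightarrow> T \<circ> (f + g) = (T \<circ> f) + (T \<circ> g)"
  by (rule ext) (simp add: clinear_add)

lemma clinear_comp_sum: "clinear T \<Longrightarrow> T \<circ> (\<Sum>i\<in>I. f i) = (\<Sum>i\<in>I. T \<circ> f i)"
  by (rule ext) (simp add: sum_fun_apply module_hom.sum module_hom_iff_linear[symmetric])

lemma clinear_comp_sum_list: "clinear T \<Longrightarrow> T \<circ> sum_list (map f ps) = sum_list (map (\<lambda>p. T \<circ> f p) ps)"
  by (induction ps) (auto simp: clinear_comp_add module_hom.zero module_hom_iff_linear[symmetric] fun_eq_iff)

lemma bounded_op_clinear: "bounded_op scl ip T \<Longrightarrow> clinear T"
  unfolding bounded_op_def by (simp add: clinearI)

lemma is_adjoint_unique: "is_adjoint T S \<Longrightarrow> is_adjoint T S' \<Longrightarrow> S = S'"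
  unfolding is_adjoint_def by (intro ext ip_eqI) metis

lemma adj_eqI: "is_adjoint T S \<Longrightarrow> adj ip T = S"
  unfolding adj_def using is_adjoint_unique by (intro the_equality) (auto simp: is_adjoint_def)

lemma is_adjoint_sym: "is_adjoint T S \<Longrightarrow> is_adjoint S T"
  unfolding is_adjoint_def by (metis ip_cnj)

lemma is_adjoint_clinear: "is_adjoint T S \<Longrightarrow> clinear S"
proof (intro clinearI)
  assume "is_adjoint T S"
  then have S: "ip (T x) y = ip x (S y)" for x y unfolding is_adjoint_def by blast
  show "S (x + y) = S x + S y" for x y
    by (rule ip_eqI) (simp add: S[symmetric] ip_add_right)
  show "S (scl c x) = scl c (S x)" for c x
    by (rule ip_eqI) (simp add: S[symmetric] ip_scale_right)
qed

lemma is_adjoint_add: "is_adjoint T S \<Longrightarrow> is_adjoint T' S' \<Longrightarrow> is_adjoint (T + T') (S + S')"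
  unfolding is_adjoint_def by (simp add: ip_add_left ip_add_right)

lemma is_adjoint_comp: "is_adjoint T S \<Longrightarrow> is_adjoint T' S' \<Longrightarrow> is_adjoint (T \<circ> T') (S' \<circ> S)"
  unfolding is_adjoint_def by simp

lemma is_adjoint_zero: "is_adjoint 0 0"
  unfolding is_adjoint_def by simp

lemma is_adjoint_id: "is_adjoint id id"
  unfolding is_adjoint_def by simp

lemma is_adjoint_scale: "is_adjoint T S \<Longrightarrow> is_adjoint (osc scl c T) (osc scl (cnj c) S)"
  unfolding is_adjoint_def osc_def by (simp add: ip_scale_left ip_scale_right)

lemma is_adjoint_sum:
  "(\<And>i. i \<in> I \<Longrightarrow> is_adjoint (T i) (S i)) \<Longrightarrow> is_adjoint (\<Sum>i\<in>I. T i) (\<Sum>i\<in>I. S i)"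
  by (induction I rule: infinite_finite_induct) (auto intro: is_adjoint_add is_adjoint_zero)

lemma is_adjoint_sum_list:
  "(\<And>p. p \<in> set ps \<Longrightarrow> is_adjoint (T p) (S p)) \<Longrightarrow>
    is_adjoint (sum_list (map T ps)) (sum_list (map S ps))"
  by (induction ps) (auto intro: is_adjoint_add is_adjoint_zero)

lemma bounded_op_bound_nonneg: "bounded_op scl ip T \<Longrightarrow> \<exists>K\<ge>0. \<forall>x. nrm (T x) \<le> K * nrm x"
  unfolding bounded_op_def
proof (elim conjE exE)
  fix K assume K: "\<forall>x. nrm (T x) \<le> K * nrm x"
  have "nrm (T x) \<le> max K 0 * nrm x" for x
    using K[rule_format, of x] mult_right_mono[OF max.cobounded1[of K 0] nrm_nonneg[of x]]
    by (rule order_trans)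
  then show "\<exists>K\<ge>0. \<forall>x. nrm (T x) \<le> K * nrm x" by (intro exI[of _ "max K 0"]) auto
qed

lemma bounded_opI: "clinear T \<Longrightarrow> (\<And>x. nrm (T x) \<le> K * nrm x) \<Longrightarrow> bounded_op scl ip T"
  unfolding bounded_op_def by (simp add: clinear_add clinear_scale) blast

lemma bounded_op_add:
  assumes "bounded_op scl ip T" "bounded_op scl ip T'"
  shows "bounded_op scl ip (T + T')"
proof -
  obtain K K' where K: "\<And>x. nrm (T x) \<le> K * nrm x" and K': "\<And>x. nrm (T' x) \<le> K' * nrm x"
    using assms unfolding bounded_op_def by blast
  show ?thesis
  proof (rule bounded_opI[where K = "K + K'"])
    show "clinear (T + T')"
      using bounded_op_clinear[OF assms(1)] bounded_op_clinear[OF assms(2)]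
      by (intro clinearI) (simp_all add: clinear_add clinear_scale scale_right_distrib)
    show "nrm ((T + T') x) \<le> (K + K') * nrm x" for x
      using nrm_triangle[of "T x" "T' x"] K[of x] K'[of x] by (simp add: distrib_right)
  qed
qed

lemma bounded_op_comp:
  assumes "bounded_op scl ip T" "bounded_op scl ip T'"
  shows "bounded_op scl ip (T \<circ> T')"
proof -
  obtain K where K: "K \<ge> 0" "\<And>x. nrm (T x) \<le> K * nrm x"
    using bounded_op_bound_nonneg[OF assms(1)] by blast
  obtain K' where K': "\<And>x. nrm (T' x) \<le> K' * nrm x"
    using assms(2) unfolding bounded_op_def by blast
  show ?thesis
  proof (rule bounded_opI[where K = "K * K'"])
    show "clinear (T \<circ> T')"
      using Vector_Spaces.linear_compose[OF bounded_op_clinear[OF assms(2)]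
          bounded_op_clinear[OF assms(1)]] .
    show "nrm ((T \<circ> T') x) \<le> (K * K') * nrm x" for x
      using K(2)[of "T' x"] mult_left_mono[OF K'[of x] K(1)] by (simp add: mult.assoc)
  qed
qed

lemma bounded_op_scale:
  assumes "bounded_op scl ip T"
  shows "bounded_op scl ip (osc scl c T)"
proof -
  obtain K where K: "\<And>x. nrm (T x) \<le> K * nrm x" using assms unfolding bounded_op_def by blast
  show ?thesis
  proof (rule bounded_opI[where K = "cmod c * K"])
    show "clinear (osc scl c T)"
      using bounded_op_clinear[OF assms]
      by (intro clinearI) (simp_all add: osc_def clinear_add clinear_scale scale_right_distrib
          scale_left_commute)
    show "nrm (osc scl c T x) \<le> (cmod c * K) * nrm x" for x
      unfolding osc_def nrm_scale using K[of x] by (simp add: mult.assoc mult_left_mono)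
  qed
qed

lemma osc_sum: "osc scl c (\<Sum>k\<in>K. f k) = (\<Sum>k\<in>K. osc scl c (f k))"
  unfolding osc_def by (rule ext) (simp add: sum_fun_apply scale_sum_right)

lemma osc_minus_one: "osc scl (-1) T = - T"
  unfolding osc_def by (rule ext) simp

lemma bounded_op_uminus: "bounded_op scl ip T \<Longrightarrow> bounded_op scl ip (- T)"
  using bounded_op_scale[of T "-1"] osc_minus_one by simp

lemma bounded_op_diff: "bounded_op scl ip T \<Longrightarrow> bounded_op scl ip T' \<Longrightarrow> bounded_op scl ip (T - T')"
  using bounded_op_add[of T "- T'"] bounded_op_uminus by simp

lemma bounded_op_zero: "bounded_op scl ip 0"
  by (rule bounded_opI[where K = 0]) (auto intro: clinearI)

lemma bounded_op_sum_list:
  "(\<And>p. p \<in> set ps \<Longrightarrow> bounded_op scl ip (T p)) \<Longrightarrow> bounded_op scl ip (sum_list (map T ps))"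
  by (induction ps) (auto intro: bounded_op_add bounded_op_zero)

lemma bounded_op_has_adjoint: "bounded_op scl ip T \<Longrightarrow> \<exists>S. is_adjoint T S"
proof -
  assume T: "bounded_op scl ip T"
  then obtain K where K: "K \<ge> 0" "\<And>x. nrm (T x) \<le> K * nrm x"
    using bounded_op_bound_nonneg by blast
  have "\<exists>z. \<forall>x. ip y (T x) = ip z x" for y
  proof (rule riesz_representation[where K = "nrm y * K"])
    show "ip y (T (x + x')) = ip y (T x) + ip y (T x')" for x x'
      using T by (simp add: bounded_op_def ip_add_right)
    show "ip y (T (scl c x)) = c * ip y (T x)" for c x
      using T by (simp add: bounded_op_def ip_scale_right)
    show "cmod (ip y (T x)) \<le> nrm y * K * nrm x" for x
      using cauchy_schwarz[of y "T x"] mult_left_mono[OF K(2)[of x] nrm_nonneg[of y]]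
      by (simp add: mult.assoc)
  qed
  then obtain S where S: "\<And>y x. ip y (T x) = ip (S y) x" by metis
  have "ip (T x) y = ip x (S y)" for x y
    using S[of y x] ip_cnj[of "T x" y] ip_cnj[of x "S y"] by simp
  then have "is_adjoint T S" unfolding is_adjoint_def by blast
  then show ?thesis by blast
qed

lemma bounded_op_is_adjoint_adj: "bounded_op scl ip T \<Longrightarrow> is_adjoint T (adj ip T)"
  using bounded_op_has_adjoint adj_eqI by blast

lemma is_adjoint_if_quadratic_forms_agree:
  assumes lT: "clinear T" and lU: "clinear U" and h: "\<And>x. ip x (U x) = ip (T x) x"
  shows "is_adjoint T U"
proof -
  define B where "B x y = ip y (U x) - ip (T y) x" for x y
  have B0: "B x x = 0" for x unfolding B_def using h by simp
  have Badd1: "B (x + x') y = B x y + B x' y" for x x' y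
    unfolding B_def using clinear_add[OF lU] by (simp add: ip_add_right ip_add_left)
  have Badd2: "B x (y + y') = B x y + B x y'" for x y y'
    unfolding B_def using clinear_add[OF lT] by (simp add: ip_add_right ip_add_left)
  have Bs1: "B (scl c x) y = c * B x y" for c x y
    unfolding B_def using clinear_scale[OF lU] by (simp add: ip_scale_right ip_scale_left algebra_simps)
  have Bs2: "B x (scl c y) = cnj c * B x y" for c x y
    unfolding B_def using clinear_scale[OF lT] by (simp add: ip_scale_right ip_scale_left algebra_simps)
  \<comment> \<open>polarization: a sesquilinear form vanishing on the diagonal vanishes\<close>
  have "B x y = 0" for x y
  proof -
    have sym: "B x y + B y x = 0"
      using B0[of "x + y"] B0[of x] B0[of y] by (simp add: Badd1 Badd2 add.commute)
    have "B (x + scl \<i> y) (x + scl \<i> y) = B x x + \<i> * B y x + cnj \<i> * (B x y + \<i> * B y y)"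
      by (simp only: Badd1 Badd2 Bs1 Bs2)
    then have "\<i> * (B y x - B x y) = 0"
      using B0[of "x + scl \<i> y"] B0[of x] B0[of y] by (simp add: right_diff_distrib)
    then show ?thesis using sym by simp
  qed
  then show ?thesis unfolding is_adjoint_def B_def by simp
qed

end

section \<open>Twisted spectral triples\<close>

locale twisted_triple = complex_hilbert scl ip
  for scl :: "complex \<Rightarrow> 'h::ab_group_add \<Rightarrow> 'h" and ip +
  fixes A :: "('h \<Rightarrow> 'h) set" and sig :: "('h \<Rightarrow> 'h) \<Rightarrow> ('h \<Rightarrow> 'h)"
    and domD :: "'h set" and D :: "'h \<Rightarrow> 'h"
  assumes A_bounded: "a \<in> A \<Longrightarrow> bounded_op scl ip a"
    and id_in_A: "id \<in> A"
    and A_add: "a \<in> A \<Longrightarrow> b \<in> A \<Longrightarrow> a + b \<in> A"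
    and A_comp: "a \<in> A \<Longrightarrow> b \<in> A \<Longrightarrow> a \<circ> b \<in> A"
    and A_scale: "a \<in> A \<Longrightarrow> osc scl c a \<in> A"
    and A_adj: "a \<in> A \<Longrightarrow> adj ip a \<in> A"
    and sig_bij: "bij_betw sig A A"
    and sig_add: "a \<in> A \<Longrightarrow> b \<in> A \<Longrightarrow> sig (a + b) = sig a + sig b"
    and sig_comp: "a \<in> A \<Longrightarrow> b \<in> A \<Longrightarrow> sig (a \<circ> b) = sig a \<circ> sig b"
    and sig_scale: "a \<in> A \<Longrightarrow> sig (osc scl c a) = osc scl c (sig a)"
    and adj_sig: "a \<in> A \<Longrightarrow> adj ip (sig a) = inv_into A sig (adj ip a)"
    and zero_in_domD: "0 \<in> domD"
    and D_add: "x \<in> domD \<Longrightarrow> y \<in> domD \<Longrightarrow> D (x + y) = D x + D y"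
    and D_scale: "x \<in> domD \<Longrightarrow> D (scl c x) = scl c (D x)"
    and domD_dense: "e > 0 \<Longrightarrow> \<exists>y\<in>domD. hnorm ip (x - y) < e"
    and D_symmetric: "x \<in> domD \<Longrightarrow> y \<in> domD \<Longrightarrow> ip (D x) y = ip x (D y)"
    and A_domD: "a \<in> A \<Longrightarrow> x \<in> domD \<Longrightarrow> a x \<in> domD"
    and twisted_commutator_bounded: "a \<in> A \<Longrightarrow>
      \<exists>T. bounded_op scl ip T \<and> (\<forall>x\<in>domD. T x = D (a x) - sig a (D x))"

lemma twisted_tripleI:
  assumes "twisted_spectral_triple scl ip gam A sig domD D"
  shows "twisted_triple scl ip A sig domD D"
proof (intro twisted_triple.intro twisted_triple_axioms.intro)
  show "complex_hilbert scl ip"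
    using assms unfolding twisted_spectral_triple_def by (elim conjE) (rule complex_hilbertI)
qed (use assms in \<open>simp add: twisted_spectral_triple_def image_subset_iff\<close>)+

context twisted_triple
begin

abbreviation d :: "('h \<Rightarrow> 'h) \<Rightarrow> ('h \<Rightarrow> 'h)" where
  "d a \<equiv> dsig scl ip sig domD D a"

lemma A_clinear: "a \<in> A \<Longrightarrow> clinear a"
  by (rule bounded_op_clinear[OF A_bounded])

lemma A_is_adjoint_adj: "a \<in> A \<Longrightarrow> is_adjoint a (adj ip a)"
  by (rule bounded_op_is_adjoint_adj[OF A_bounded])

lemma zero_in_A: "0 \<in> A"
proof -
  have "osc scl 0 id = 0" unfolding osc_def by (rule ext) simp
  then show ?thesis using A_scale[OF id_in_A, of 0] by simp
qed

lemma A_sum: "(\<And>i. i \<in> I \<Longrightarrow> f i \<in> A) \<Longrightarrow> (\<Sum>i\<in>I. f i) \<in> A"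
  by (induction I rule: infinite_finite_induct) (auto intro: A_add zero_in_A)

lemma sig_in_A: "a \<in> A \<Longrightarrow> sig a \<in> A"
  by (rule bij_betw_apply[OF sig_bij])

lemma sig_zero: "sig 0 = 0"
  using sig_add[OF zero_in_A zero_in_A] by simp

lemma sig_sum: "(\<And>i. i \<in> I \<Longrightarrow> f i \<in> A) \<Longrightarrow> sig (\<Sum>i\<in>I. f i) = (\<Sum>i\<in>I. sig (f i))"
proof (induction I rule: infinite_finite_induct)
  case (insert x F)
  have fx: "f x \<in> A" and fF: "sum f F \<in> A" using insert.prems by (auto intro: A_sum)
  have IH: "sig (sum f F) = (\<Sum>i\<in>F. sig (f i))" using insert.IH insert.prems by simp
  show ?case unfolding sum.insert[OF insert.hyps] sig_add[OF fx fF] IH by (rule refl)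
qed (auto simp: sig_zero)

lemma sig_adj_sig: "a \<in> A \<Longrightarrow> sig (adj ip (sig a)) = adj ip a"
  unfolding adj_sig using sig_bij A_adj by (simp add: bij_betw_def f_inv_into_f)

lemma D_zero: "D 0 = 0"
  using D_scale[OF zero_in_domD, of 0] by simp

lemma vanishes_if_vanishes_on_domD:
  assumes add: "\<And>x y. G (x + y) = G x + G y" and bd: "\<And>x. cmod (G x) \<le> C * nrm x"
    and vanish: "\<And>x. x \<in> domD \<Longrightarrow> G x = 0"
  shows "G x = 0"
proof -
  define C' where "C' = max C 0"
  have bd': "cmod (G x) \<le> C' * nrm x" for x
    using bd[of x] mult_right_mono[OF max.cobounded1[of C 0] nrm_nonneg[of x]]
    unfolding C'_def by (rule order_trans)
  have C'0: "C' \<ge> 0" unfolding C'_def by simp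
  have "cmod (G x) \<le> e" if e: "e > 0" for e
  proof -
    obtain y where y: "y \<in> domD" "nrm (x - y) < e / (C' + 1)"
      using domD_dense[of "e / (C' + 1)"] e C'0 by auto
    have "G x = G (x - y)" using add[of "x - y" y] vanish[OF y(1)] by simp
    then have "cmod (G x) \<le> C' * nrm (x - y)" using bd' by simp
    also have "\<dots> \<le> C' * (e / (C' + 1))" using y(2) C'0 by (intro mult_left_mono) auto
    also have "\<dots> \<le> e" using C'0 e by (simp add: field_simps)
    finally show ?thesis .
  qed
  then have "cmod (G x) \<le> 0" using field_le_epsilon[of "cmod (G x)" 0] by simp
  then show ?thesis by simp
qed

lemma bounded_op_eqI_on_domD:
  assumes T1: "bounded_op scl ip T1" and T2: "bounded_op scl ip T2"
    and agree: "\<And>x. x \<in> domD \<Longrightarrow> T1 x = T2 x"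
  shows "T1 = T2"
proof (rule ext)
  fix x
  define T where "T = T1 - T2"
  have T: "bounded_op scl ip T" unfolding T_def using T1 T2 by (rule bounded_op_diff)
  obtain K where K: "K \<ge> 0" "\<And>x. nrm (T x) \<le> K * nrm x"
    using bounded_op_bound_nonneg[OF T] by blast
  define w where "w = T x"
  have "ip w (T x) = 0"
  proof (rule vanishes_if_vanishes_on_domD[where G = "\<lambda>z. ip w (T z)" and C = "nrm w * K"])
    show "ip w (T (z + z')) = ip w (T z) + ip w (T z')" for z z'
      using bounded_op_clinear[OF T] by (simp add: clinear_add ip_add_right)
    show "cmod (ip w (T z)) \<le> nrm w * K * nrm z" for z
      using cauchy_schwarz[of w "T z"] mult_left_mono[OF K(2)[of z] nrm_nonneg[of w]]
      by (simp add: mult.assoc)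
    show "ip w (T z) = 0" if "z \<in> domD" for z using agree[OF that] unfolding T_def by simp
  qed
  then have "w = 0" using ip_self_eq_0D unfolding w_def by simp
  then show "T1 x = T2 x" unfolding w_def T_def by simp
qed

lemma dsig_eqI:
  assumes "bounded_op scl ip T" "\<And>x. x \<in> domD \<Longrightarrow> T x = D (a x) - sig a (D x)"
  shows "d a = T"
  unfolding dsig_def
proof (rule the_equality)
  show "bounded_op scl ip T \<and> (\<forall>x\<in>domD. T x = D (a x) - sig a (D x))" using assms by blast
  fix T' assume "bounded_op scl ip T' \<and> (\<forall>x\<in>domD. T' x = D (a x) - sig a (D x))"
  then show "T' = T" using assms by (intro bounded_op_eqI_on_domD) auto
qed

lemma
  assumes "a \<in> A"
  shows dsig_bounded: "bounded_op scl ip (d a)"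
    and dsig_on_domD: "x \<in> domD \<Longrightarrow> d a x = D (a x) - sig a (D x)"
proof -
  obtain T where T: "bounded_op scl ip T" "\<And>x. x \<in> domD \<Longrightarrow> T x = D (a x) - sig a (D x)"
    using twisted_commutator_bounded[OF assms] by blast
  then have "d a = T" by (rule dsig_eqI)
  then show "bounded_op scl ip (d a)" "x \<in> domD \<Longrightarrow> d a x = D (a x) - sig a (D x)"
    using T by auto
qed

lemma dsig_twisted_leibniz:
  assumes a: "a \<in> A" and b: "b \<in> A"
  shows "d (a \<circ> b) = (sig a \<circ> d b) + (d a \<circ> b)"
proof (rule dsig_eqI)
  show "bounded_op scl ip ((sig a \<circ> d b) + (d a \<circ> b))"
    by (intro bounded_op_add bounded_op_comp A_bounded sig_in_A a b dsig_bounded)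
  fix x assume x: "x \<in> domD"
  have "((sig a \<circ> d b) + (d a \<circ> b)) x = sig a (D (b x) - sig b (D x)) + (D (a (b x)) - sig a (D (b x)))"
    using dsig_on_domD[OF b x] dsig_on_domD[OF a A_domD[OF b x]] by simp
  also have "\<dots> = D (a (b x)) - sig a (sig b (D x))"
    using clinear_diff[OF A_clinear[OF sig_in_A[OF a]]] by simp
  finally show "((sig a \<circ> d b) + (d a \<circ> b)) x = D ((a \<circ> b) x) - sig (a \<circ> b) (D x)"
    using sig_comp[OF a b] by simp
qed

lemma dsig_add:
  assumes a: "a \<in> A" and b: "b \<in> A"
  shows "d (a + b) = d a + d b"
proof (rule dsig_eqI)
  show "bounded_op scl ip (d a + d b)" by (intro bounded_op_add dsig_bounded a b)
  fix x assume x: "x \<in> domD"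
  show "(d a + d b) x = D ((a + b) x) - sig (a + b) (D x)"
    using dsig_on_domD[OF a x] dsig_on_domD[OF b x] D_add[OF A_domD[OF a x] A_domD[OF b x]]
      sig_add[OF a b]
    by (simp add: algebra_simps)
qed

lemma dsig_scale:
  assumes a: "a \<in> A"
  shows "d (osc scl c a) = osc scl c (d a)"
proof (rule dsig_eqI)
  show "bounded_op scl ip (osc scl c (d a))" by (intro bounded_op_scale dsig_bounded a)
  fix x assume x: "x \<in> domD"
  show "osc scl c (d a) x = D (osc scl c a x) - sig (osc scl c a) (D x)"
    using dsig_on_domD[OF a x] D_scale[OF A_domD[OF a x]] sig_scale[OF a]
    by (simp add: osc_def scale_right_diff_distrib)
qed

lemma dsig_zero: "d 0 = 0"
  by (rule dsig_eqI) (simp_all add: bounded_op_zero sig_zero D_zero)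

lemma dsig_sum: "(\<And>i. i \<in> I \<Longrightarrow> f i \<in> A) \<Longrightarrow> d (\<Sum>i\<in>I. f i) = (\<Sum>i\<in>I. d (f i))"
proof (induction I rule: infinite_finite_induct)
  case (insert x F)
  have fx: "f x \<in> A" and fF: "sum f F \<in> A" using insert.prems by (auto intro: A_sum)
  have IH: "d (sum f F) = (\<Sum>i\<in>F. d (f i))" using insert.IH insert.prems by simp
  show ?case unfolding sum.insert[OF insert.hyps] dsig_add[OF fx fF] IH by (rule refl)
qed (auto simp: dsig_zero)

lemma is_adjoint_if_on_domD:
  assumes T: "bounded_op scl ip T" and S: "bounded_op scl ip S"
    and h: "\<And>x y. x \<in> domD \<Longrightarrow> y \<in> domD \<Longrightarrow> ip (T x) y = ip x (S y)"
  shows "is_adjoint T S"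
proof -
  obtain K where K: "K \<ge> 0" "\<And>x. nrm (T x) \<le> K * nrm x"
    using bounded_op_bound_nonneg[OF T] by blast
  obtain K' where K': "K' \<ge> 0" "\<And>x. nrm (S x) \<le> K' * nrm x"
    using bounded_op_bound_nonneg[OF S] by blast
  define G where "G x y = ip (T x) y - ip x (S y)" for x y
  have G_bound: "cmod (G x y) \<le> nrm (T x) * nrm y + nrm x * nrm (S y)" for x y
  proof -
    have "cmod (G x y) \<le> cmod (ip (T x) y) + cmod (ip x (S y))"
      unfolding G_def by (rule norm_triangle_ineq4)
    also have "\<dots> \<le> nrm (T x) * nrm y + nrm x * nrm (S y)" by (intro add_mono cauchy_schwarz)
    finally show ?thesis .
  qed
  \<comment> \<open>extend the identity by density, first in the left and then in the right argument\<close>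
  have G_left: "G x y = 0" if y: "y \<in> domD" for x y
  proof (rule vanishes_if_vanishes_on_domD[where G = "\<lambda>x. G x y" and C = "K * nrm y + nrm (S y)"])
    show "G (x + x') y = G x y + G x' y" for x x'
      using bounded_op_clinear[OF T] unfolding G_def by (simp add: clinear_add ip_add_left)
    show "cmod (G x y) \<le> (K * nrm y + nrm (S y)) * nrm x" for x
      using G_bound[of x y] mult_right_mono[OF K(2)[of x] nrm_nonneg[of y]]
      by (simp add: algebra_simps)
    show "G x y = 0" if "x \<in> domD" for x using h[OF that y] unfolding G_def by simp
  qed
  have "G x y = 0" for x y
  proof (rule vanishes_if_vanishes_on_domD[where G = "G x" and C = "nrm (T x) + nrm x * K'"])
    show "G x (y + y') = G x y + G x y'" for y y'
      using bounded_op_clinear[OF S] unfolding G_def by (simp add: clinear_add ip_add_right)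
    show "cmod (G x y) \<le> (nrm (T x) + nrm x * K') * nrm y" for y
      using G_bound[of x y] mult_left_mono[OF K'(2)[of y] nrm_nonneg[of x]]
      by (simp add: algebra_simps)
  qed (rule G_left)
  then show ?thesis unfolding is_adjoint_def G_def by simp
qed

lemma dsig_is_adjoint:
  assumes a: "a \<in> A"
  shows "is_adjoint (d a) (- d (adj ip (sig a)))"
proof (rule is_adjoint_if_on_domD)
  define b where "b = adj ip (sig a)"
  have b: "b \<in> A" unfolding b_def by (intro A_adj sig_in_A a)
  show "bounded_op scl ip (d a)" by (rule dsig_bounded[OF a])
  show "bounded_op scl ip (- d (adj ip (sig a)))"
    using b unfolding b_def by (intro bounded_op_uminus dsig_bounded)
  fix x y assume x: "x \<in> domD" and y: "y \<in> domD"
  have "ip (d a x) y = ip (D (a x)) y - ip (sig a (D x)) y"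
    using dsig_on_domD[OF a x] by (simp add: ip_diff_left)
  also have "ip (D (a x)) y = ip x (adj ip a (D y))"
    using D_symmetric[OF A_domD[OF a x] y] A_is_adjoint_adj[OF a] unfolding is_adjoint_def by simp
  also have "ip (sig a (D x)) y = ip x (D (b y))"
    using A_is_adjoint_adj[OF sig_in_A[OF a]] D_symmetric[OF x A_domD[OF b y]]
    unfolding is_adjoint_def b_def by simp
  also have "ip x (adj ip a (D y)) - ip x (D (b y)) = ip x ((- d b) y)"
    using dsig_on_domD[OF b y] sig_adj_sig[OF a] by (simp add: ip_diff_right b_def)
  finally show "ip (d a x) y = ip x ((- d (adj ip (sig a))) y)" unfolding b_def .
qed

lemma adj_dsig: "a \<in> A \<Longrightarrow> adj ip (d a) = - d (adj ip (sig a))"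
  using dsig_is_adjoint adj_eqI by blast

lemma Omega1_bounded:
  assumes "\<omega> \<in> Omega1 scl A d"
  shows "bounded_op scl ip \<omega>"
proof -
  obtain ps where ps: "\<forall>(c, a, b)\<in>set ps. a \<in> A \<and> b \<in> A"
    and \<omega>: "\<omega> = sum_list (map (\<lambda>(c, a, b). osc scl c (a \<circ> d b)) ps)"
    using assms unfolding Omega1_def by blast
  have "bounded_op scl ip ((\<lambda>(c, a, b). osc scl c (a \<circ> d b)) p)" if "p \<in> set ps" for p
  proof -
    obtain c a b where p: "p = (c, a, b)" by (cases p) auto
    have "a \<in> A" "b \<in> A" using ps that p by auto
    then show ?thesis unfolding p by (auto intro: bounded_op_scale bounded_op_comp A_bounded dsig_bounded)
  qed
  then show ?thesis unfolding \<omega> by (rule bounded_op_sum_list)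
qed

lemma dsig_in_Omega1: "a \<in> A \<Longrightarrow> d a \<in> Omega1 scl A d"
  unfolding Omega1_def
  by (intro CollectI exI[of _ "[(1, id, a)]"] conjI) (simp_all add: id_in_A osc_def fun_eq_iff)

end

section \<open>The Grassmannian module\<close>

lemma matvec_rmul: "matvec q M (rmul v a) = rmul (matvec q M v) a"
  by (rule ext) (simp add: matvec_def rmul_def comp_sum_left o_assoc)

lemma rmul_id: "rmul v id = v"
  unfolding rmul_def by (rule ext) simp

context complex_hilbert
begin

lemma matvec_add:
  "(\<And>i j. clinear (M i j)) \<Longrightarrow> matvec q M (v + w) = matvec q M v + matvec q M w"
  by (rule ext) (simp add: matvec_def clinear_comp_add sum.distrib)

lemma matvec_matvec:
  assumes M: "\<And>i j. clinear (M i j)"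
  shows "matvec q M (matvec q P v) = matvec q (matmul q M P) v"
proof (rule ext)
  fix i
  show "matvec q M (matvec q P v) i = matvec q (matmul q M P) v i"
  proof (cases "i < q")
    case True
    have "matvec q M (matvec q P v) i = (\<Sum>j<q. M i j \<circ> (\<Sum>k<q. P j k \<circ> v k))"
      using True by (simp add: matvec_def)
    also have "\<dots> = (\<Sum>j<q. \<Sum>k<q. M i j \<circ> (P j k \<circ> v k))"
      by (simp add: clinear_comp_sum[OF M])
    also have "\<dots> = (\<Sum>k<q. (\<Sum>j<q. M i j \<circ> P j k) \<circ> v k)"
      by (subst sum.swap) (simp add: o_assoc comp_sum_left)
    also have "\<dots> = matvec q (matmul q M P) v i"
      using True by (simp add: matvec_def matmul_def)
    finally show ?thesis .
  qed (simp add: matvec_def)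
qed

end

locale grassmannian = twisted_triple scl ip A sig domD D
  for scl :: "complex \<Rightarrow> 'h::ab_group_add \<Rightarrow> 'h" and ip A sig domD D +
  fixes q :: nat and e :: "nat \<Rightarrow> nat \<Rightarrow> 'h \<Rightarrow> 'h"
  assumes e_mat: "is_mat q A e"
    and e_idem: "matmul q e e = e"
    and sig_e: "i < q \<Longrightarrow> j < q \<Longrightarrow> sig (e i j) = adj ip (e j i)"
begin

abbreviation se :: "nat \<Rightarrow> nat \<Rightarrow> 'h \<Rightarrow> 'h" where
  "se i j \<equiv> sig (e i j)"

abbreviation E :: "(nat \<Rightarrow> 'h \<Rightarrow> 'h) set" where
  "E \<equiv> matvec q e ` vecs q A"

abbreviation Esig :: "(nat \<Rightarrow> 'h \<Rightarrow> 'h) set" where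
  "Esig \<equiv> matvec q se ` vecs q A"

lemma vecsD: "v \<in> vecs q S \<Longrightarrow> j < q \<Longrightarrow> v j \<in> S"
  and vecs_zeroD: "v \<in> vecs q S \<Longrightarrow> \<not> j < q \<Longrightarrow> v j = 0"
  unfolding vecs_def by auto

lemma vecsI: "(\<And>j. j < q \<Longrightarrow> v j \<in> S) \<Longrightarrow> (\<And>j. \<not> j < q \<Longrightarrow> v j = 0) \<Longrightarrow> v \<in> vecs q S"
  unfolding vecs_def by auto

lemma e_in_A: "e i j \<in> A"
  using e_mat zero_in_A unfolding is_mat_def by (cases "i < q \<and> j < q") auto

lemma se_in_A: "se i j \<in> A"
  by (rule sig_in_A[OF e_in_A])

lemma vecs_in_A: "v \<in> vecs q A \<Longrightarrow> v j \<in> A"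
  using vecsD[of v A j] vecs_zeroD[of v A j] zero_in_A by (cases "j < q") auto

lemma matvec_in_vecs: "(\<And>i j. M i j \<in> A) \<Longrightarrow> v \<in> vecs q A \<Longrightarrow> matvec q M v \<in> vecs q A"
  by (rule vecsI) (auto simp: matvec_def intro!: A_sum A_comp dest: vecsD)

lemma E_in_A: "\<xi> \<in> E \<Longrightarrow> \<xi> j \<in> A"
  by (auto intro!: vecs_in_A matvec_in_vecs e_in_A)

lemma Esig_in_A: "\<xi> \<in> Esig \<Longrightarrow> \<xi> j \<in> A"
  by (auto intro!: vecs_in_A matvec_in_vecs se_in_A)

lemma E_fixed_by_e:
  assumes "\<xi> \<in> E" "i < q"
  shows "(\<Sum>j<q. e i j \<circ> \<xi> j) = \<xi> i"
proof -
  obtain v where v: "\<xi> = matvec q e v" using assms(1) by blast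
  have "matvec q e \<xi> = \<xi>"
    unfolding v matvec_matvec[OF A_clinear[OF e_in_A]] e_idem ..
  then have "matvec q e \<xi> i = \<xi> i" by simp
  then show ?thesis using assms(2) unfolding matvec_def by simp
qed

lemma E_add: "\<xi> \<in> E \<Longrightarrow> \<eta> \<in> E \<Longrightarrow> \<xi> + \<eta> \<in> E"
proof -
  assume "\<xi> \<in> E" "\<eta> \<in> E"
  then obtain v w where vw: "\<xi> = matvec q e v" "\<eta> = matvec q e w" "v \<in> vecs q A" "w \<in> vecs q A"
    by blast
  have "v + w \<in> vecs q A"
  proof (rule vecsI)
    show "(v + w) j \<in> A" if "j < q" for j
      using vecsD[OF vw(3) that] vecsD[OF vw(4) that] by (simp add: A_add)
    show "(v + w) j = 0" if "\<not> j < q" for j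
      using vecs_zeroD[OF vw(3) that] vecs_zeroD[OF vw(4) that] by simp
  qed
  moreover have "\<xi> + \<eta> = matvec q e (v + w)"
    unfolding vw(1,2) by (rule matvec_add[OF A_clinear[OF e_in_A], symmetric])
  ultimately show ?thesis by blast
qed

lemma E_rmul: "\<xi> \<in> E \<Longrightarrow> a \<in> A \<Longrightarrow> rmul \<xi> a \<in> E"
proof -
  assume "\<xi> \<in> E" and a: "a \<in> A"
  then obtain v where v: "\<xi> = matvec q e v" "v \<in> vecs q A" by blast
  have "rmul v a \<in> vecs q A"
  proof (rule vecsI)
    show "rmul v a j \<in> A" if "j < q" for j
      using vecsD[OF v(2) that] a by (simp add: A_comp rmul_def)
    show "rmul v a j = 0" if "\<not> j < q" for j
      using vecs_zeroD[OF v(2) that] by (simp add: rmul_def)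
  qed
  moreover have "rmul \<xi> a = matvec q e (rmul v a)" unfolding v(1) by (rule matvec_rmul[symmetric])
  ultimately show ?thesis by blast
qed

lemma sigvec_in_Esig:
  assumes "\<xi> \<in> E"
  shows "sigvec q sig \<xi> \<in> Esig"
proof -
  obtain v where v: "\<xi> = matvec q e v" "v \<in> vecs q A" using assms by blast
  have sv: "sigvec q sig v \<in> vecs q A"
    by (rule vecsI) (auto simp: sigvec_def intro: sig_in_A vecsD[OF v(2)])
  have "sigvec q sig \<xi> i = matvec q se (sigvec q sig v) i" for i
  proof (cases "i < q")
    case True
    have "sigvec q sig \<xi> i = sig (\<Sum>k<q. e i k \<circ> v k)"
      using True v(1) by (simp add: sigvec_def matvec_def)
    also have "\<dots> = (\<Sum>k<q. sig (e i k \<circ> v k))"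
      by (rule sig_sum) (auto intro: A_comp e_in_A vecs_in_A[OF v(2)])
    also have "\<dots> = (\<Sum>k<q. se i k \<circ> sigvec q sig v k)"
      by (rule sum.cong) (auto simp: sigvec_def sig_comp e_in_A vecs_in_A[OF v(2)])
    finally show ?thesis using True by (simp add: matvec_def)
  qed (simp add: sigvec_def matvec_def)
  then have "sigvec q sig \<xi> = matvec q se (sigvec q sig v)" by (rule ext)
  then show ?thesis using sv by (rule rev_image_eqI[rotated])
qed

lemma adj_E_component:
  assumes xi: "\<xi> \<in> E" and k: "k < q"
  shows "adj ip (\<xi> k) = (\<Sum>j<q. adj ip (\<xi> j) \<circ> se j k)"
proof -
  have "is_adjoint (\<Sum>j<q. e k j \<circ> \<xi> j) (\<Sum>j<q. adj ip (\<xi> j) \<circ> se j k)"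
  proof (rule is_adjoint_sum)
    fix j assume "j \<in> {..<q}"
    then have "se j k = adj ip (e k j)" using sig_e k by simp
    then show "is_adjoint (e k j \<circ> \<xi> j) (adj ip (\<xi> j) \<circ> se j k)"
      using is_adjoint_comp[OF A_is_adjoint_adj[OF e_in_A] A_is_adjoint_adj[OF E_in_A[OF xi]]]
      by simp
  qed
  then show ?thesis unfolding E_fixed_by_e[OF xi k] by (rule adj_eqI)
qed

definition grassmann_connection :: "(nat \<Rightarrow> 'h \<Rightarrow> 'h) \<Rightarrow> (nat \<Rightarrow> 'h \<Rightarrow> 'h)" where
  "grassmann_connection \<xi> = matvec q se (\<lambda>j. if j < q then d (\<xi> j) else 0)"

lemma grassmann_connection_component:
  "i < q \<Longrightarrow> grassmann_connection \<xi> i = (\<Sum>k<q. se i k \<circ> d (\<xi> k))"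
  and grassmann_connection_zero: "\<not> i < q \<Longrightarrow> grassmann_connection \<xi> i = 0"
  unfolding grassmann_connection_def matvec_def by (auto intro: sum.cong)

theorem grassmann_connection_is_sigma_connection:
  "sigma_connection scl A d E (matvec q se ` vecs q (Omega1 scl A d)) (sigvec q sig)
     grassmann_connection"
  unfolding sigma_connection_def
proof (intro conjI ballI allI)
  fix \<xi> assume xi: "\<xi> \<in> E"
  have "(\<lambda>j. if j < q then d (\<xi> j) else 0) \<in> vecs q (Omega1 scl A d)"
    by (rule vecsI) (auto intro: dsig_in_Omega1 E_in_A[OF xi])
  then show "grassmann_connection \<xi> \<in> matvec q se ` vecs q (Omega1 scl A d)"
    unfolding grassmann_connection_def by (rule imageI)
next
  fix \<xi> \<eta> assume xi: "\<xi> \<in> E" and eta: "\<eta> \<in> E"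
  have "(\<lambda>j. if j < q then d ((\<xi> + \<eta>) j) else 0)
      = (\<lambda>j. if j < q then d (\<xi> j) else 0) + (\<lambda>j. if j < q then d (\<eta> j) else 0)"
    by (rule ext) (simp add: dsig_add E_in_A[OF xi] E_in_A[OF eta])
  then show "grassmann_connection (\<xi> + \<eta>) = grassmann_connection \<xi> + grassmann_connection \<eta>"
    unfolding grassmann_connection_def by (simp add: matvec_add A_clinear[OF se_in_A])
next
  fix c \<xi> assume xi: "\<xi> \<in> E"
  have "grassmann_connection (\<lambda>j. osc scl c (\<xi> j)) i = osc scl c (grassmann_connection \<xi> i)" for i
  proof (cases "i < q")
    case True
    have "grassmann_connection (\<lambda>j. osc scl c (\<xi> j)) i = (\<Sum>k<q. se i k \<circ> osc scl c (d (\<xi> k)))"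
      unfolding grassmann_connection_component[OF True] by (simp add: dsig_scale E_in_A[OF xi])
    also have "\<dots> = (\<Sum>k<q. osc scl c (se i k \<circ> d (\<xi> k)))"
      by (rule sum.cong) (auto simp: osc_def fun_eq_iff clinear_scale[OF A_clinear[OF se_in_A]])
    also have "\<dots> = osc scl c (grassmann_connection \<xi> i)"
      unfolding grassmann_connection_component[OF True] by (rule osc_sum[symmetric])
    finally show ?thesis .
  qed (simp add: grassmann_connection_zero osc_def fun_eq_iff)
  then show "grassmann_connection (\<lambda>j. osc scl c (\<xi> j)) = (\<lambda>j. osc scl c (grassmann_connection \<xi> j))"
    by (rule ext)
next
  fix \<xi> a assume xi: "\<xi> \<in> E" and a: "a \<in> A"
  have "grassmann_connection (rmul \<xi> a) i
      = (rmul (grassmann_connection \<xi>) a + (\<lambda>j. sigvec q sig \<xi> j \<circ> d a)) i" for i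
  proof (cases "i < q")
    case True
    \<comment> \<open>Leibniz splits off sigma(e) sigma(xi) d(a), and sigma(e) sigma(xi) = sigma(e xi) = sigma(xi)\<close>
    have "grassmann_connection (rmul \<xi> a) i
        = (\<Sum>k<q. (sig (e i k \<circ> \<xi> k) \<circ> d a) + ((se i k \<circ> d (\<xi> k)) \<circ> a))"
      using True A_clinear[OF se_in_A]
      by (simp add: grassmann_connection_component rmul_def dsig_twisted_leibniz E_in_A[OF xi] a
          clinear_comp_add o_assoc sig_comp e_in_A)
    also have "\<dots> = (sig (\<Sum>k<q. e i k \<circ> \<xi> k) \<circ> d a) + ((\<Sum>k<q. se i k \<circ> d (\<xi> k)) \<circ> a)"
      by (simp add: sum.distrib comp_sum_left sig_sum A_comp e_in_A E_in_A[OF xi])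
    finally show ?thesis
      using True by (simp add: E_fixed_by_e[OF xi True] grassmann_connection_component rmul_def
          sigvec_def add.commute)
  qed (simp add: grassmann_connection_zero rmul_def sigvec_def)
  then show "grassmann_connection (rmul \<xi> a)
      = rmul (grassmann_connection \<xi>) a + (\<lambda>j. sigvec q sig \<xi> j \<circ> d a)"
    by (rule ext)
qed

end

context grassmannian
begin

lemma metric0_is_adjoint_swap:
  "(\<And>j. \<xi> j \<in> A) \<Longrightarrow> (\<And>j. \<eta> j \<in> A) \<Longrightarrow> is_adjoint (metric0 q ip \<eta> \<xi>) (metric0 q ip \<xi> \<eta>)"
  unfolding metric0_def
  by (intro is_adjoint_sum is_adjoint_comp is_adjoint_sym[OF A_is_adjoint_adj] A_is_adjoint_adj) auto

lemma adj_grassmann_connection: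
  assumes xi: "\<xi> \<in> E" and j: "j < q"
  shows "adj ip (grassmann_connection \<xi> j) = (\<Sum>k<q. adj ip (d (\<xi> k)) \<circ> e k j)"
proof -
  have "is_adjoint (\<Sum>k<q. se j k \<circ> d (\<xi> k)) (\<Sum>k<q. adj ip (d (\<xi> k)) \<circ> e k j)"
  proof (rule is_adjoint_sum)
    fix k assume "k \<in> {..<q}"
    then have "is_adjoint (se j k) (e k j)"
      using sig_e j is_adjoint_sym[OF A_is_adjoint_adj[OF e_in_A]] by simp
    then show "is_adjoint (se j k \<circ> d (\<xi> k)) (adj ip (d (\<xi> k)) \<circ> e k j)"
      using is_adjoint_comp bounded_op_is_adjoint_adj[OF dsig_bounded[OF E_in_A[OF xi]]] by blast
  qed
  then show ?thesis unfolding grassmann_connection_component[OF j] by (rule adj_eqI)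
qed

lemma metric0_grassmann_connection_right:
  assumes xi: "\<xi> \<in> E" and eta: "\<eta> \<in> E"
  shows "(\<Sum>j<q. adj ip (\<xi> j) \<circ> grassmann_connection \<eta> j) = (\<Sum>k<q. adj ip (\<xi> k) \<circ> d (\<eta> k))"
proof -
  have lx: "clinear (adj ip (\<xi> j))" for j
    by (rule is_adjoint_clinear[OF A_is_adjoint_adj[OF E_in_A[OF xi]]])
  have "(\<Sum>j<q. adj ip (\<xi> j) \<circ> grassmann_connection \<eta> j)
      = (\<Sum>j<q. \<Sum>k<q. adj ip (\<xi> j) \<circ> (se j k \<circ> d (\<eta> k)))"
    by (rule sum.cong) (auto simp: grassmann_connection_component clinear_comp_sum[OF lx])
  also have "\<dots> = (\<Sum>k<q. (\<Sum>j<q. adj ip (\<xi> j) \<circ> se j k) \<circ> d (\<eta> k))"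
    by (subst sum.swap) (simp add: o_assoc comp_sum_left)
  also have "\<dots> = (\<Sum>k<q. adj ip (\<xi> k) \<circ> d (\<eta> k))"
    by (rule sum.cong) (simp_all add: adj_E_component[OF xi, symmetric])
  finally show ?thesis .
qed

lemma metric0_grassmann_connection_left:
  assumes xi: "\<xi> \<in> E" and eta: "\<eta> \<in> E"
  shows "(\<Sum>j<q. adj ip (grassmann_connection \<xi> j) \<circ> \<eta> j) = (\<Sum>k<q. adj ip (d (\<xi> k)) \<circ> \<eta> k)"
proof -
  have ld: "clinear (adj ip (d (\<xi> k)))" for k
    by (rule is_adjoint_clinear[OF bounded_op_is_adjoint_adj[OF dsig_bounded[OF E_in_A[OF xi]]]])
  have "(\<Sum>j<q. adj ip (grassmann_connection \<xi> j) \<circ> \<eta> j)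
      = (\<Sum>j<q. \<Sum>k<q. adj ip (d (\<xi> k)) \<circ> (e k j \<circ> \<eta> j))"
    by (rule sum.cong) (auto simp: adj_grassmann_connection[OF xi] comp_sum_left o_assoc)
  also have "\<dots> = (\<Sum>k<q. adj ip (d (\<xi> k)) \<circ> (\<Sum>j<q. e k j \<circ> \<eta> j))"
    by (subst sum.swap) (simp add: clinear_comp_sum[OF ld])
  also have "\<dots> = (\<Sum>k<q. adj ip (d (\<xi> k)) \<circ> \<eta> k)"
    by (rule sum.cong) (auto simp: E_fixed_by_e[OF eta])
  finally show ?thesis .
qed

end

locale grassmannian_hermitian = grassmannian scl ip A sig domD D q e
  for scl :: "complex \<Rightarrow> 'h::ab_group_add \<Rightarrow> 'h" and ip A sig domD D q e +
  fixes h :: "(nat \<Rightarrow> 'h \<Rightarrow> 'h) \<Rightarrow> (nat \<Rightarrow> 'h \<Rightarrow> 'h) \<Rightarrow> ('h \<Rightarrow> 'h)"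
    and s :: "(nat \<Rightarrow> 'h \<Rightarrow> 'h) \<Rightarrow> (nat \<Rightarrow> 'h \<Rightarrow> 'h)"
  assumes h_metric: "hermitian_metric scl ip A (matvec q e ` vecs q A) h"
    and s_iso: "module_iso A (matvec q (\<lambda>i j. sig (e i j)) ` vecs q A) (matvec q e ` vecs q A) s"
    and h_s_left: "\<eta> \<in> matvec q (\<lambda>i j. sig (e i j)) ` vecs q A \<Longrightarrow> \<xi> \<in> matvec q e ` vecs q A \<Longrightarrow>
      h (s \<eta>) \<xi> = metric0 q ip \<eta> \<xi>"
begin

lemma h_in_A: "\<xi> \<in> E \<Longrightarrow> \<eta> \<in> E \<Longrightarrow> h \<xi> \<eta> \<in> A"
  and h_rmul: "\<xi> \<in> E \<Longrightarrow> \<eta> \<in> E \<Longrightarrow> a \<in> A \<Longrightarrow> b \<in> A \<Longrightarrow>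
    h (rmul \<xi> a) (rmul \<eta> b) = adj ip a \<circ> h \<xi> \<eta> \<circ> b"
  and h_add_left: "\<xi> \<in> E \<Longrightarrow> \<xi>' \<in> E \<Longrightarrow> \<eta> \<in> E \<Longrightarrow> h (\<xi> + \<xi>') \<eta> = h \<xi> \<eta> + h \<xi>' \<eta>"
  and h_add_right: "\<xi> \<in> E \<Longrightarrow> \<xi>' \<in> E \<Longrightarrow> \<eta> \<in> E \<Longrightarrow> h \<eta> (\<xi> + \<xi>') = h \<eta> \<xi> + h \<eta> \<xi>'"
  and h_self_Im: "\<xi> \<in> E \<Longrightarrow> Im (ip x (h \<xi> \<xi> x)) = 0"
  using h_metric unfolding hermitian_metric_def positive_op_def by blast+

lemma h_Im_swap: 
  assumes "\<xi> \<in> E" "\<eta> \<in> E"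
  shows "Im (ip x (h \<xi> \<eta> x)) + Im (ip x (h \<eta> \<xi> x)) = 0"
proof -
  have "h (\<xi> + \<eta>) (\<xi> + \<eta>) = h \<xi> \<xi> + h \<xi> \<eta> + (h \<eta> \<xi> + h \<eta> \<eta>)"
    using assms E_add by (simp add: h_add_left h_add_right)
  then have "Im (ip x (h (\<xi> + \<eta>) (\<xi> + \<eta>) x))
      = Im (ip x (h \<xi> \<xi> x)) + Im (ip x (h \<xi> \<eta> x)) + (Im (ip x (h \<eta> \<xi> x)) + Im (ip x (h \<eta> \<eta> x)))"
    by (simp add: ip_add_right)
  then show ?thesis using h_self_Im[of "\<xi> + \<eta>" x] h_self_Im[of \<xi> x] h_self_Im[of \<eta> x] assms E_add
    by simp
qed

text \<open>Testing h_Im_swap also against i xi makes the quadratic forms of h(xi,eta) and h(eta,xi)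
  complex conjugate, and polarization turns this into adjointness.\<close>

lemma h_is_adjoint_swap:
  assumes xi: "\<xi> \<in> E" and eta: "\<eta> \<in> E"
  shows "is_adjoint (h \<xi> \<eta>) (h \<eta> \<xi>)"
proof (rule is_adjoint_if_quadratic_forms_agree)
  show "clinear (h \<xi> \<eta>)" "clinear (h \<eta> \<xi>)" using A_clinear h_in_A xi eta by blast+
  fix x
  have i_A: "osc scl \<i> id \<in> A" by (rule A_scale[OF id_in_A])
  define \<xi>' where "\<xi>' = rmul \<xi> (osc scl \<i> id)"
  have xi': "\<xi>' \<in> E" unfolding \<xi>'_def using E_rmul xi i_A by blast
  have "adj ip (osc scl \<i> id) = osc scl (- \<i>) id"
    using adj_eqI[OF is_adjoint_scale[OF is_adjoint_id, of \<i>]] by simp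
  moreover have "adj ip id = id" by (rule adj_eqI[OF is_adjoint_id])
  ultimately have h1: "h \<xi>' \<eta> = osc scl (- \<i>) id \<circ> h \<xi> \<eta>"
    and h2: "h \<eta> \<xi>' = h \<eta> \<xi> \<circ> osc scl \<i> id"
    using h_rmul[OF xi eta i_A id_in_A] h_rmul[OF eta xi id_in_A i_A] unfolding \<xi>'_def rmul_id
    by simp_all
  define \<alpha> where "\<alpha> = ip x (h \<xi> \<eta> x)"
  define \<beta> where "\<beta> = ip x (h \<eta> \<xi> x)"
  have "Im \<alpha> + Im \<beta> = 0" unfolding \<alpha>_def \<beta>_def by (rule h_Im_swap[OF xi eta])
  moreover have "Im (- \<i> * \<alpha>) + Im (\<i> * \<beta>) = 0"
  proof -
    have "ip x (h \<xi>' \<eta> x) = - \<i> * \<alpha>"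
      unfolding h1 \<alpha>_def by (simp add: osc_def ip_scale_right ip_minus_right)
    moreover have "ip x (h \<eta> \<xi>' x) = \<i> * \<beta>"
      using A_clinear[OF h_in_A[OF eta xi]] unfolding h2 \<beta>_def
      by (simp add: osc_def ip_scale_right clinear_scale)
    ultimately show ?thesis using h_Im_swap[OF xi' eta, of x] by simp
  qed
  ultimately have "\<beta> = cnj \<alpha>" by (simp add: complex_eq_iff)
  then show "ip x (h \<eta> \<xi> x) = ip (h \<xi> \<eta> x) x" unfolding \<alpha>_def \<beta>_def by (simp add: ip_cnj[of x])
qed

lemma s_in_E: "\<eta> \<in> Esig \<Longrightarrow> s \<eta> \<in> E"
  using s_iso unfolding module_iso_def by (elim conjE) (erule bij_betw_apply, assumption)

lemma h_s_right:
  assumes xi: "\<xi> \<in> E" and eta: "\<eta> \<in> Esig"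
  shows "h \<xi> (s \<eta>) = metric0 q ip \<xi> \<eta>"
proof -
  have "adj ip (h (s \<eta>) \<xi>) = h \<xi> (s \<eta>)" by (rule adj_eqI[OF h_is_adjoint_swap[OF s_in_E[OF eta] xi]])
  moreover have "adj ip (h (s \<eta>) \<xi>) = metric0 q ip \<xi> \<eta>"
    unfolding h_s_left[OF eta xi]
    by (rule adj_eqI[OF metric0_is_adjoint_swap]) (auto intro: E_in_A[OF xi] Esig_in_A[OF eta])
  ultimately show ?thesis by simp
qed

theorem is_sigma_hermitian_structure: "sigma_hermitian_structure scl ip A sig E Esig (sigvec q sig) h s"
  unfolding sigma_hermitian_structure_def
proof (intro conjI ballI h_metric s_iso)
  fix \<xi>1 \<xi>2 assume x1: "\<xi>1 \<in> E" and x2: "\<xi>2 \<in> E"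
  have in_A: "adj ip (sig (\<xi>1 j)) \<circ> \<xi>2 j \<in> A" for j
    by (intro A_comp A_adj sig_in_A E_in_A[OF x1] E_in_A[OF x2])
  have "h \<xi>1 (s (sigvec q sig \<xi>2)) = (\<Sum>j<q. adj ip (\<xi>1 j) \<circ> sig (\<xi>2 j))"
    using h_s_right[OF x1 sigvec_in_Esig[OF x2]] by (simp add: metric0_def sigvec_def)
  also have "\<dots> = (\<Sum>j<q. sig (adj ip (sig (\<xi>1 j)) \<circ> \<xi>2 j))"
    by (rule sum.cong) (auto simp: sig_comp sig_adj_sig E_in_A[OF x1] E_in_A[OF x2] A_adj sig_in_A)
  also have "\<dots> = sig (h (s (sigvec q sig \<xi>1)) \<xi>2)"
    using h_s_left[OF sigvec_in_Esig[OF x1] x2] in_A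
    by (simp add: sig_sum metric0_def sigvec_def)
  finally show "h \<xi>1 (s (sigvec q sig \<xi>2)) = sig (h (s (sigvec q sig \<xi>1)) \<xi>2)" .
qed

lemma decompD:
  assumes "decomp Esig (Omega1 scl A d) v ps"
  shows "\<And>p. p \<in> set ps \<Longrightarrow> fst p \<in> Esig \<and> snd p \<in> Omega1 scl A d"
    and "\<And>j. v j = sum_list (map (\<lambda>p. fst p j \<circ> snd p) ps)"
  using assms unfolding decomp_def
  by (auto simp: split_def rmul_def sum_list_fun_apply comp_def)

lemma decomp_pairing_right:
  assumes xi: "\<xi> \<in> E" and dq: "decomp Esig (Omega1 scl A d) (grassmann_connection \<eta>) qs"
  shows "sum_list (map (\<lambda>(\<eta>b, \<psi>). h \<xi> (s \<eta>b) \<circ> \<psi>) qs)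
    = (\<Sum>j<q. adj ip (\<xi> j) \<circ> grassmann_connection \<eta> j)"
proof -
  have lx: "clinear (adj ip (\<xi> j))" for j
    by (rule is_adjoint_clinear[OF A_is_adjoint_adj[OF E_in_A[OF xi]]])
  have "sum_list (map (\<lambda>(\<eta>b, \<psi>). h \<xi> (s \<eta>b) \<circ> \<psi>) qs)
      = sum_list (map (\<lambda>p. \<Sum>j<q. adj ip (\<xi> j) \<circ> (fst p j \<circ> snd p)) qs)"
    using decompD(1)[OF dq]
    by (intro arg_cong[where f = sum_list] map_cong)
      (auto simp: split_def h_s_right[OF xi] metric0_def comp_sum_left o_assoc)
  also have "\<dots> = (\<Sum>j<q. adj ip (\<xi> j) \<circ> sum_list (map (\<lambda>p. fst p j \<circ> snd p) qs))"
    by (simp add: sum_list_sum_swap clinear_comp_sum_list[OF lx])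
  finally show ?thesis by (simp add: decompD(2)[OF dq])
qed

lemma decomp_pairing_left:
  assumes eta: "\<eta> \<in> E" and dp: "decomp Esig (Omega1 scl A d) (grassmann_connection \<xi>) ps"
  shows "sum_list (map (\<lambda>(\<xi>a, \<omega>). adj ip \<omega> \<circ> h (s \<xi>a) \<eta>) ps)
    = (\<Sum>j<q. adj ip (grassmann_connection \<xi> j) \<circ> \<eta> j)"
proof -
  have adj_p: "is_adjoint (fst p j \<circ> snd p) (adj ip (snd p) \<circ> adj ip (fst p j))" and
    lin_p: "clinear (adj ip (snd p))" if "p \<in> set ps" for p j
  proof -
    have "is_adjoint (snd p) (adj ip (snd p))"
      using decompD(1)[OF dp that] by (blast intro: bounded_op_is_adjoint_adj Omega1_bounded)
    then show "is_adjoint (fst p j \<circ> snd p) (adj ip (snd p) \<circ> adj ip (fst p j))"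
      "clinear (adj ip (snd p))"
      using decompD(1)[OF dp that] by (auto intro: is_adjoint_comp A_is_adjoint_adj Esig_in_A
          is_adjoint_clinear)
  qed
  have "sum_list (map (\<lambda>(\<xi>a, \<omega>). adj ip \<omega> \<circ> h (s \<xi>a) \<eta>) ps)
      = sum_list (map (\<lambda>p. \<Sum>j<q. (adj ip (snd p) \<circ> adj ip (fst p j)) \<circ> \<eta> j) ps)"
    using decompD(1)[OF dp] lin_p
    by (intro arg_cong[where f = sum_list] map_cong)
      (auto simp: split_def h_s_left[OF _ eta] metric0_def clinear_comp_sum o_assoc)
  also have "\<dots> = (\<Sum>j<q. sum_list (map (\<lambda>p. adj ip (snd p) \<circ> adj ip (fst p j)) ps) \<circ> \<eta> j)"
    by (simp add: sum_list_sum_swap comp_sum_list_left)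
  also have "\<dots> = (\<Sum>j<q. adj ip (grassmann_connection \<xi> j) \<circ> \<eta> j)"
  proof (rule sum.cong[OF refl])
    fix j
    have "adj ip (grassmann_connection \<xi> j) = sum_list (map (\<lambda>p. adj ip (snd p) \<circ> adj ip (fst p j)) ps)"
      unfolding decompD(2)[OF dp]
      by (rule adj_eqI[OF is_adjoint_sum_list[of ps "\<lambda>p. fst p j \<circ> snd p", OF adj_p]])
    then show "sum_list (map (\<lambda>p. adj ip (snd p) \<circ> adj ip (fst p j)) ps) \<circ> \<eta> j
        = adj ip (grassmann_connection \<xi> j) \<circ> \<eta> j" by simp
  qed
  finally show ?thesis .
qed

lemma dsig_h_sigvec:
  assumes xi: "\<xi> \<in> E" and eta: "\<eta> \<in> E"
  shows "d (h (s (sigvec q sig \<xi>)) \<eta>)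
    = (\<Sum>k<q. adj ip (\<xi> k) \<circ> d (\<eta> k)) - (\<Sum>k<q. adj ip (d (\<xi> k)) \<circ> \<eta> k)"
proof -
  have in_A: "adj ip (sig (\<xi> k)) \<in> A" for k by (intro A_adj sig_in_A E_in_A[OF xi])
  have "h (s (sigvec q sig \<xi>)) \<eta> = (\<Sum>k<q. adj ip (sig (\<xi> k)) \<circ> \<eta> k)"
    using h_s_left[OF sigvec_in_Esig[OF xi] eta] by (simp add: metric0_def sigvec_def)
  then have "d (h (s (sigvec q sig \<xi>)) \<eta>) = (\<Sum>k<q. d (adj ip (sig (\<xi> k)) \<circ> \<eta> k))"
    by (simp add: dsig_sum A_comp in_A E_in_A[OF eta])
  also have "\<dots> = (\<Sum>k<q. (adj ip (\<xi> k) \<circ> d (\<eta> k)) - (adj ip (d (\<xi> k)) \<circ> \<eta> k))"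
    using adj_dsig[OF E_in_A[OF xi]]
    by (simp add: dsig_twisted_leibniz[OF in_A E_in_A[OF eta]] sig_adj_sig[OF E_in_A[OF xi]]
        comp_uminus_left)
  finally show ?thesis by (simp add: sum_subtractf)
qed

theorem grassmann_connection_is_sigma_hermitian:
  "sigma_hermitian_connection ip d (Omega1 scl A d) E Esig (sigvec q sig) h s grassmann_connection"
  unfolding sigma_hermitian_connection_def
  by (simp add: decomp_pairing_right decomp_pairing_left metric0_grassmann_connection_right
      metric0_grassmann_connection_left dsig_h_sigvec)

end

theorem lemma6p2:
  fixes scl :: "complex \<Rightarrow> 'h::ab_group_add \<Rightarrow> 'h"
    and ip :: "'h \<Rightarrow> 'h \<Rightarrow> complex"
    and gam D :: "'h \<Rightarrow> 'h" and domD :: "'h set"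
    and A :: "('h \<Rightarrow> 'h) set" and sig :: "('h \<Rightarrow> 'h) \<Rightarrow> ('h \<Rightarrow> 'h)"
    and q :: nat and e :: "nat \<Rightarrow> nat \<Rightarrow> 'h \<Rightarrow> 'h"
    and h :: "(nat \<Rightarrow> 'h \<Rightarrow> 'h) \<Rightarrow> (nat \<Rightarrow> 'h \<Rightarrow> 'h) \<Rightarrow> ('h \<Rightarrow> 'h)"
    and s :: "(nat \<Rightarrow> 'h \<Rightarrow> 'h) \<Rightarrow> (nat \<Rightarrow> 'h \<Rightarrow> 'h)"
  defines "E \<equiv> matvec q e ` vecs q A"
    and "Esig \<equiv> matvec q (\<lambda>i j. sig (e i j)) ` vecs q A"
    and "sigE \<equiv> sigvec q sig"
    and "nabla0 \<equiv> (\<lambda>\<xi>. matvec q (\<lambda>i j. sig (e i j)) (\<lambda>j. if j < q then dsig scl ip sig domD D (\<xi> j) else 0))"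
  assumes tst: "twisted_spectral_triple scl ip gam A sig domD D"
    and e_mat: "is_mat q A e"
    and e_idem: "matmul q e e = e"
    and e_sig: "\<forall>i<q. \<forall>j<q. sig (e i j) = adj ip (e j i)"
    and h_metric: "hermitian_metric scl ip A E h"
    and s_iso: "module_iso A Esig E s"
    and s_prop: "\<forall>\<eta>\<in>Esig. \<forall>\<xi>\<in>E. h (s \<eta>) \<xi> = metric0 q ip \<eta> \<xi>"
  shows "sigma_hermitian_structure scl ip A sig E Esig sigE h s \<and>
         sigma_connection scl A (dsig scl ip sig domD D) E
           (matvec q (\<lambda>i j. sig (e i j)) ` vecs q (Omega1 scl A (dsig scl ip sig domD D))) sigE nabla0 \<and>
         sigma_hermitian_connection ip (dsig scl ip sig domD D)
           (Omega1 scl A (dsig scl ip sig domD D)) E Esig sigE h s nabla0"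
proof -
  interpret grassmannian_hermitian scl ip A sig domD D q e h s
  proof (intro grassmannian_hermitian.intro grassmannian.intro grassmannian_axioms.intro
      grassmannian_hermitian_axioms.intro twisted_tripleI[OF tst])
  qed (use e_mat e_idem e_sig h_metric s_iso s_prop in \<open>unfold E_def Esig_def, blast\<close>)+
  show ?thesis
    unfolding E_def Esig_def sigE_def nabla0_def grassmann_connection_def[abs_def, symmetric]
    using is_sigma_hermitian_structure grassmann_connection_is_sigma_connection
      grassmann_connection_is_sigma_hermitian
    by (intro conjI)
qed

end
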